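(* For $k'\in(0,1)$ set $k=\sqrt{1-k'^2}$ and define $$A(k')=\sqrt{k\,k'\,{}_2F_1\!\left(\tfrac12,\tfrac12;1;k^2\right){}_2F_1\!\left(\tfrac12,\tfrac12;1;k'^2\right)},\qquad B(k')=\sqrt{{}_2F_1\!\left(\tfrac12,\tfrac12;1;k^2\right){}_2F_1\!\left(\tfrac12,\tfrac12;1;k'^2\right)}.$$ Then for all $k'\in(0,1)$, $$A(k')\le A\!\left(\tfrac{1}{\sqrt2}\right)\quad\text{and}\quad B(k')\ge B\!\left(\tfrac{1}{\sqrt2}\right),$$ with equality in either inequality if and only if $k'=k=\tfrac{1}{\sqrt2}$ (which corresponds to the square torus, $\alpha=1$). Equivalently, for all $\alpha>0$, $\theta_4(e^{-\pi\alpha^2})\theta_4(e^{-\pi\alpha^{-2}})\le\theta_4(e^{-\pi})^2$ and $\theta_3(e^{-\pi\alpha^2})\theta_3(e^{-\pi\alpha^{-2}})\ge\theta_3(e^{-\pi})^2$, with equality iff $\alpha=1$.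
   Context: ${}_2F_1(a,b;c;x)=\sum_{n\ge0}\frac{(a)_n(b)_n}{(c)_n}\frac{x^n}{n!}$ with $(z)_n=\Gamma(z+n)/\Gamma(z)$. Theta-nulls for $0<q<1$: $\theta_3(q)=\sum_{k\in\mathbb{Z}} q^{k^2}$, $\theta_4(q)=\sum_{k\in\mathbb{Z}}(-1)^k q^{k^2}$. For $\alpha>0$, $k'=\theta_4(e^{-\pi\alpha^2})^2/\theta_3(e^{-\pi\alpha^2})^2$ is the complementary elliptic modulus, and $A(k'),B(k')$ equal the minimum and maximum over $(x,y)\in\mathbb{R}^2$ of $\sum_{(k,l)\in\mathbb{Z}^2}e^{-\pi(\alpha^2k^2+\alpha^{-2}l^2)}e^{2\pi i(kx+ly)}$. *)

theory Defs
  imports "HOL-Analysis.Analysis"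
begin

definition hyp2F1 :: "real \<Rightarrow> real \<Rightarrow> real \<Rightarrow> real \<Rightarrow> real" where
  "hyp2F1 a b c x = (\<Sum>n. pochhammer a n * pochhammer b n / pochhammer c n * x ^ n / fact n)"

definition theta3 :: "real \<Rightarrow> real" where
  "theta3 q = (\<Sum>\<^sub>\<infinity>k::int. q ^ nat (k * k))"

definition theta4 :: "real \<Rightarrow> real" where
  "theta4 q = (\<Sum>\<^sub>\<infinity>k::int. (-1) ^ nat \<bar>k\<bar> * q ^ nat (k * k))"

definition A_fun :: "real \<Rightarrow> real" where
  "A_fun k' = (let k = sqrt (1 - k'^2) in
     sqrt (k * k' * hyp2F1 (1/2) (1/2) 1 (k^2) * hyp2F1 (1/2) (1/2) 1 (k'^2)))"

definition B_fun :: "real \<Rightarrow> real" where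
  "B_fun k' = (let k = sqrt (1 - k'^2) in
     sqrt (hyp2F1 (1/2) (1/2) 1 (k^2) * hyp2F1 (1/2) (1/2) 1 (k'^2)))"

end

theory Submission
  imports Defs "HOL-Probability.Probability"
begin

text \<open>
  Poisson summation for the Gaussian \<open>e\<^sup>-\<^sup>\<pi>\<^sup>a\<^sup>t\<^sup>2\<close>, obtained by checking that its
  periodisation and its Fourier series are continuous, symmetric about \<open>1/2\<close> and have the same
  cosine coefficients, gives Jacobi's transformations \<open>\<theta>\<^sub>3(e\<^sup>-\<^sup>\<pi>\<^sup>/\<^sup>x) = \<surd>x \<theta>\<^sub>3(e\<^sup>-\<^sup>\<pi>\<^sup>x)\<close> and
  \<open>\<theta>\<^sub>4(e\<^sup>-\<^sup>\<pi>\<^sup>/\<^sup>x) = \<surd>x \<theta>\<^sub>2(e\<^sup>-\<^sup>\<pi>\<^sup>x)\<close>. Both products are invariant under \<open>x \<mapsto> 1/x\<close>, so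
  their derivatives vanish at \<open>x = 1\<close>. The \<open>\<theta>\<^sub>3\<close> product equals \<open>\<surd>x \<theta>\<^sub>3\<^sup>2\<close>, whose derivative has the
  sign of \<open>\<theta>\<^sub>3/4 + x\<theta>\<^sub>3'\<close>, an increasing function for \<open>x \<ge> 1\<close>; the logarithm of the \<open>\<theta>\<^sub>4\<close>
  product is strictly concave for \<open>x \<ge> 1\<close> because \<open>\<theta>\<^sub>4\<close> is log-concave there.

  With \<open>t = k'\<^sup>2\<close> and \<open>F = \<^sub>2F\<^sub>1(1/2,1/2;1;\<cdot>)\<close> one has
  \<open>ln A\<^sup>2 = \<phi>(t) + \<phi>(1-t)\<close> with \<open>\<phi> = ln t/4 + ln (1-t)/4 + ln F\<close>, and \<open>ln B\<^sup>2 = ln F(t) + ln F(1-t)\<close>.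
  The differential equation \<open>t(1-t)F'' + (1-2t)F' - F/4 = 0\<close> makes \<open>\<phi>\<close> strictly concave and
  \<open>F'/F\<close> strictly increasing, so both sums are extremal exactly at \<open>t = 1/2\<close>.
\<close>

section \<open>The Fourier transform of the Gaussian\<close>

lemma std_normal_cos_lborel:
  fixes t :: real
  shows "integrable lborel (\<lambda>x. std_normal_density x * cos (t*x))"
    and "(LINT x|lborel. std_normal_density x * cos (t*x)) = exp (-(t^2)/2)"
proof -
  have int_density: "integrable lborel std_normal_density"
    using integrable_std_normal_moment[of 0] by simp
  have int_char: "integrable lborel (\<lambda>x. std_normal_density x *\<^sub>R iexp (t*x))"
    by (rule Bochner_Integration.integrable_bound[OF int_density]) (auto simp: norm_mult)
  have char_eq: "char std_normal_distribution t = (CLINT x|lborel. std_normal_density x *\<^sub>R iexp (t*x))"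
    unfolding char_def by (subst integral_density) auto
  have Re_eq: "Re (std_normal_density x *\<^sub>R iexp (t*x)) = std_normal_density x * cos (t*x)" for x
  proof -
    have "iexp (t*x) = cis (t*x)" by (simp add: cis_conv_exp)
    then show ?thesis by simp
  qed
  have "(LINT x|lborel. std_normal_density x * cos (t*x))
      = (LINT x|lborel. Re (std_normal_density x *\<^sub>R iexp (t*x)))"
    by (simp only: Re_eq)
  also have "\<dots> = Re (char std_normal_distribution t)"
    unfolding char_eq by (rule integral_Re[OF int_char])
  also have "\<dots> = exp (-(t^2)/2)" by (simp add: char_std_normal_distribution)
  finally show "(LINT x|lborel. std_normal_density x * cos (t*x)) = exp (-(t^2)/2)" .
  show "integrable lborel (\<lambda>x. std_normal_density x * cos (t*x))"
    by (rule Bochner_Integration.integrable_bound[OF int_density])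
       (auto simp: abs_mult intro!: mult_left_le)
qed

lemma gaussian_cos_lborel:
  fixes a m :: real
  assumes a: "a > 0"
  shows "integrable lborel (\<lambda>t. exp (-(pi*a*t^2)) * cos (2*pi*m*t))"
    and "(LINT t|lborel. exp (-(pi*a*t^2)) * cos (2*pi*m*t)) = exp (-(pi*m^2/a)) / sqrt a"
proof -
  define c where "c = sqrt (2*pi*a)"
  define \<tau> where "\<tau> = 2*pi*m/c"
  have c: "c > 0" "c^2 = 2*pi*a" using a by (simp_all add: c_def)
  let ?f = "\<lambda>x. std_normal_density x * cos (\<tau>*x)"
  have rescale: "(\<lambda>t. sqrt (2*pi) * ?f (0 + c*t)) = (\<lambda>t. exp (-(pi*a*t^2)) * cos (2*pi*m*t))"
  proof
    fix t
    have "-((c*t)^2)/2 = -(pi*a*t^2)" by (simp add: power_mult_distrib c)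
    moreover have "\<tau>*(c*t) = 2*pi*m*t" using c by (simp add: \<tau>_def)
    ultimately show "sqrt (2*pi) * ?f (0 + c*t) = exp (-(pi*a*t^2)) * cos (2*pi*m*t)"
      unfolding std_normal_density_def add_0 by (simp only:) simp
  qed
  have "integrable lborel (\<lambda>t. ?f (0 + c * t))"
    using lborel_integrable_real_affine[OF std_normal_cos_lborel(1), of c 0] c by simp
  then show "integrable lborel (\<lambda>t. exp (-(pi*a*t^2)) * cos (2*pi*m*t))"
    unfolding rescale[symmetric] by (rule integrable_mult_right)
  have "exp (-(\<tau>^2)/2) = c * (LINT t|lborel. ?f (0 + c*t))"
    using lborel_integral_real_affine[of c ?f 0] c std_normal_cos_lborel(2)[of \<tau>] by simp
  also have "(LINT t|lborel. ?f (0 + c*t)) = (LINT t|lborel. exp (-(pi*a*t^2)) * cos (2*pi*m*t)) / sqrt (2*pi)"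
    unfolding rescale[symmetric] by simp
  finally have "(LINT t|lborel. exp (-(pi*a*t^2)) * cos (2*pi*m*t)) = exp (-(\<tau>^2)/2) * (sqrt (2*pi) / c)"
    using c by (simp add: field_simps)
  also have "\<dots> = exp (-(pi*m^2/a)) / sqrt a"
  proof -
    have "-(\<tau>^2)/2 = -(pi*m^2/a)"
      using a c by (simp add: \<tau>_def field_simps power2_eq_square)
    moreover have "sqrt (2*pi) / c = 1 / sqrt a" using a by (simp add: c_def real_sqrt_mult field_simps)
    ultimately show ?thesis by simp
  qed
  finally show "(LINT t|lborel. exp (-(pi*a*t^2)) * cos (2*pi*m*t)) = exp (-(pi*m^2/a)) / sqrt a" .
qed

lemma gaussian_cos_has_integral:
  fixes a m :: real
  assumes "a > 0"
  shows "((\<lambda>t. exp (-(pi*a*t^2)) * cos (2*pi*m*t)) has_integral (exp (-(pi*m^2/a)) / sqrt a)) UNIV"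
  using has_integral_integral_lborel[OF gaussian_cos_lborel(1)[OF assms]] gaussian_cos_lborel(2)[OF assms]
  by simp

section \<open>Uniqueness of cosine coefficients\<close>

inductive cos_poly :: "(real \<Rightarrow> real) \<Rightarrow> bool" where
  cos: "cos_poly (\<lambda>\<theta>. cos (real k * \<theta>))"
| add: "cos_poly f \<Longrightarrow> cos_poly g \<Longrightarrow> cos_poly (\<lambda>\<theta>. f \<theta> + g \<theta>)"
| cmult: "cos_poly f \<Longrightarrow> cos_poly (\<lambda>\<theta>. c * f \<theta>)"

lemma cos_poly_const: "cos_poly (\<lambda>\<theta>. c)"
  using cos_poly.cmult[OF cos_poly.cos[of 0], of c] by simp

lemma cos_poly_sum:
  assumes "finite I" "\<And>i. i \<in> I \<Longrightarrow> cos_poly (f i)"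
  shows "cos_poly (\<lambda>\<theta>. \<Sum>i\<in>I. f i \<theta>)"
  using assms by (induction I rule: finite_induct) (auto intro: cos_poly.add cos_poly_const[of 0, simplified])

lemma cos_poly_cos_mult:
  assumes "cos_poly f"
  shows "cos_poly (\<lambda>\<theta>. cos \<theta> * f \<theta>)"
  using assms
proof induction
  case (cos k)
  show ?case
  proof (cases k)
    case 0
    then show ?thesis using cos_poly.cos[of 1] by simp
  next
    case (Suc j)
    have "cos \<theta> * cos (real k * \<theta>) = 1/2 * cos (real j * \<theta>) + 1/2 * cos (real (Suc k) * \<theta>)" for \<theta>
      unfolding cos_times_cos using Suc by (simp add: algebra_simps)
    then show ?thesis
      by (simp only:) (intro cos_poly.add cos_poly.cmult cos_poly.cos)
  qed
next
  case (add f g)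
  then show ?case using cos_poly.add[OF add.IH] by (simp add: distrib_left)
next
  case (cmult f c)
  then show ?case using cos_poly.cmult[OF cmult.IH, of c] by (simp add: mult.left_commute)
qed

lemma cos_poly_polynomial_of_cos:
  assumes "real_polynomial_function P"
  shows "cos_poly (\<lambda>\<theta>. P (cos \<theta>))"
proof -
  have cos_power: "cos_poly (\<lambda>\<theta>. cos \<theta> ^ i)" for i
  proof (induction i)
    case 0
    show ?case using cos_poly_const[of 1] by simp
  next
    case (Suc i)
    show ?case using cos_poly_cos_mult[OF Suc.IH] by simp
  qed
  obtain a n where P: "P = (\<lambda>x. \<Sum>i\<le>n. a i * x^i)"
    using assms real_polynomial_function_iff_sum by blast
  show ?thesis
    unfolding P by (rule cos_poly_sum) (simp_all add: cos_poly.cmult cos_power)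
qed

lemma cos_poly_continuous: "cos_poly f \<Longrightarrow> continuous_on S f"
proof (induction rule: cos_poly.induct)
  case (cos k)
  show ?case by (auto intro!: continuous_intros)
next
  case (add f g)
  show ?case using continuous_on_add[OF add.IH] .
next
  case (cmult f c)
  show ?case using continuous_on_mult_left[OF cmult.IH] .
qed

lemma cos_poly_integrable:
  assumes h: "continuous_on {0..1} h" and "cos_poly u"
  shows "(\<lambda>y. h y * u (2*pi*y)) integrable_on {0..1}"
proof -
  have "continuous_on {0..1} (\<lambda>y. u (2*pi*y))"
    using continuous_on_compose2[OF cos_poly_continuous[OF \<open>cos_poly u\<close>]
        continuous_on_mult_left[OF continuous_on_id]]
    by blast
  then show ?thesis by (intro integrable_continuous_interval continuous_on_mult[OF h])
qed

lemma integral_cos_poly_eq_0: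
  fixes h :: "real \<Rightarrow> real"
  assumes h: "continuous_on {0..1} h"
    and orth: "\<And>m::nat. integral {0..1} (\<lambda>y. h y * cos (2*pi*real m*y)) = 0"
    and "cos_poly f"
  shows "integral {0..1} (\<lambda>y. h y * f (2*pi*y)) = 0"
  using \<open>cos_poly f\<close>
proof induction
  case (cos k)
  have "(\<lambda>y. h y * cos (real k * (2*pi*y))) = (\<lambda>y. h y * cos (2*pi*real k*y))"
    by (simp add: mult_ac)
  then show ?case using orth[of k] by simp
next
  case (add f g)
  have "integral {0..1} (\<lambda>y. h y * (f (2*pi*y) + g (2*pi*y)))
      = integral {0..1} (\<lambda>y. h y * f (2*pi*y)) + integral {0..1} (\<lambda>y. h y * g (2*pi*y))"
    unfolding distrib_left by (rule integral_add[OF cos_poly_integrable[OF h add.hyps(1)] cos_poly_integrable[OF h add.hyps(2)]])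
  then show ?case using add.IH by simp
next
  case (cmult f c)
  have "(\<lambda>y. h y * (c * f (2*pi*y))) = (\<lambda>y. c * (h y * f (2*pi*y)))"
    by (simp add: mult_ac)
  then show ?case using cmult.IH by simp
qed

lemma symmetric_continuous_as_comp_cos:
  fixes h :: "real \<Rightarrow> real"
  assumes h: "continuous_on {0..1} h" and sym: "\<And>y. y \<in> {0..1} \<Longrightarrow> h (1 - y) = h y"
  obtains E where "continuous_on {-1..1} E" "\<And>y. y \<in> {0..1} \<Longrightarrow> h y = E (cos (2*pi*y))"
proof
  define E where "E u = h (arccos u / (2*pi))" for u
  show "continuous_on {-1..1} E"
    unfolding E_def
  proof (rule continuous_on_compose2[OF h])
    show "continuous_on {-1..1} (\<lambda>x. arccos x / (2 * pi))"
      by (intro continuous_on_divide continuous_on_arccos' continuous_on_const) auto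
    have "0 \<le> arccos u \<and> arccos u \<le> 2 * pi" if "u \<in> {-1..1}" for u
      using arccos_lbound[of u] arccos_ubound[of u] that pi_gt_zero by auto
    then show "(\<lambda>x. arccos x / (2 * pi)) ` {-1..1} \<subseteq> {0..1}"
      by (auto simp: divide_le_eq)
  qed
  show "h y = E (cos (2*pi*y))" if y: "y \<in> {0..1}" for y
  proof (cases "y \<le> 1/2")
    case True
    have "arccos (cos (2*pi*y)) = 2*pi*y" using y True by (intro arccos_cos) auto
    then show ?thesis unfolding E_def by simp
  next
    case False
    have "arccos (cos (2*pi*(1-y))) = 2*pi*(1-y)" using y False by (intro arccos_cos) auto
    moreover have "cos (2*pi*(1-y)) = cos (2*pi*y)"
    proof -
      have "cos (2*pi*(1-y)) = cos (2*pi - 2*pi*y)" by (simp add: algebra_simps)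
      then show ?thesis by (simp add: cos_diff)
    qed
    ultimately have "E (cos (2*pi*y)) = h (1 - y)" unfolding E_def by simp
    then show ?thesis using sym[OF y] by simp
  qed
qed

lemma integral_square_le_of_cos_poly_approx:
  fixes h :: "real \<Rightarrow> real"
  assumes h: "continuous_on {0..1} h"
    and orth: "\<And>m::nat. integral {0..1} (\<lambda>y. h y * cos (2*pi*real m*y)) = 0"
    and P: "real_polynomial_function P"
    and approx: "\<And>y. y \<in> {0..1} \<Longrightarrow> \<bar>h y - P (cos (2*pi*y))\<bar> \<le> \<epsilon>"
  shows "integral {0..1} (\<lambda>y. h y * h y) \<le> \<epsilon> * integral {0..1} (\<lambda>y. \<bar>h y\<bar>)"
proof -
  have int_abs: "(\<lambda>y. \<bar>h y\<bar>) integrable_on {0..1}" and int_sq: "(\<lambda>y. h y * h y) integrable_on {0..1}"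
    by (intro integrable_continuous_interval continuous_intros h)+
  have int_hP: "(\<lambda>y. h y * P (cos (2*pi*y))) integrable_on {0..1}"
    using cos_poly_integrable[OF h cos_poly_polynomial_of_cos[OF P]] by simp
  have "integral {0..1} (\<lambda>y. h y * P (cos (2*pi*y))) = 0"
    using integral_cos_poly_eq_0[OF h orth cos_poly_polynomial_of_cos[OF P]] by simp
  then have "integral {0..1} (\<lambda>y. h y * h y) = integral {0..1} (\<lambda>y. h y * h y - h y * P (cos (2*pi*y)))"
    by (simp add: integral_diff[OF int_sq int_hP])
  also have "\<dots> \<le> integral {0..1} (\<lambda>y. \<epsilon> * \<bar>h y\<bar>)"
  proof (rule integral_le)
    show "(\<lambda>y. h y * h y - h y * P (cos (2*pi*y))) integrable_on {0..1}"
      using int_sq int_hP by (rule integrable_diff)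
    show "(\<lambda>y. \<epsilon> * \<bar>h y\<bar>) integrable_on {0..1}" using int_abs by (rule integrable_on_mult_right)
    fix y :: real assume y: "y \<in> {0..1}"
    have "h y * h y - h y * P (cos (2*pi*y)) = h y * (h y - P (cos (2*pi*y)))"
      by (simp add: right_diff_distrib)
    also have "\<dots> \<le> \<bar>h y\<bar> * \<bar>h y - P (cos (2*pi*y))\<bar>"
      by (metis abs_ge_self abs_mult)
    also have "\<dots> \<le> \<bar>h y\<bar> * \<epsilon>"
      using approx[OF y] by (intro mult_left_mono) auto
    finally show "h y * h y - h y * P (cos (2*pi*y)) \<le> \<epsilon> * \<bar>h y\<bar>"
      by (simp add: mult.commute)
  qed
  also have "\<dots> = \<epsilon> * integral {0..1} (\<lambda>y. \<bar>h y\<bar>)" by simp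
  finally show ?thesis .
qed

text \<open>By Stone--Weierstrass, \<open>h\<close> is uniformly approximated by polynomials in \<open>cos (2\<pi>y)\<close>,
  so \<open>\<integral> h\<^sup>2 = 0\<close>.\<close>
lemma symmetric_cos_orthogonal_imp_zero:
  fixes h :: "real \<Rightarrow> real"
  assumes h: "continuous_on {0..1} h"
    and sym: "\<And>y. y \<in> {0..1} \<Longrightarrow> h (1 - y) = h y"
    and orth: "\<And>m::nat. integral {0..1} (\<lambda>y. h y * cos (2*pi*real m*y)) = 0"
    and y: "y \<in> {0..1}"
  shows "h y = 0"
proof -
  obtain E where E: "continuous_on {-1..1} E" and hE: "\<And>y. y \<in> {0..1} \<Longrightarrow> h y = E (cos (2*pi*y))"
    using symmetric_continuous_as_comp_cos[OF h sym] by blast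
  have int_abs: "(\<lambda>y. \<bar>h y\<bar>) integrable_on {0..1}" and int_sq: "(\<lambda>y. h y * h y) integrable_on {0..1}"
    by (intro integrable_continuous_interval continuous_intros h)+
  define B where "B = integral {0..1} (\<lambda>y. \<bar>h y\<bar>)"
  have B: "B \<ge> 0" unfolding B_def by (rule integral_nonneg[OF int_abs]) auto
  have "integral {0..1} (\<lambda>y. h y * h y) \<le> e" if e: "e > 0" for e
  proof -
    have \<epsilon>: "e / (B + 1) > 0" using e B by simp
    obtain P where P: "real_polynomial_function P" "\<And>x. x \<in> {-1..1} \<Longrightarrow> \<bar>E x - P x\<bar> < e / (B + 1)"
      using Stone_Weierstrass_real_polynomial_function[OF compact_Icc E \<epsilon>] by blast
    have "integral {0..1} (\<lambda>y. h y * h y) \<le> e / (B + 1) * integral {0..1} (\<lambda>y. \<bar>h y\<bar>)"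
    proof (rule integral_square_le_of_cos_poly_approx[OF h orth P(1)])
      show "\<bar>h y - P (cos (2*pi*y))\<bar> \<le> e / (B + 1)" if "y \<in> {0..1}" for y
        using hE[OF that] P(2)[of "cos (2*pi*y)"] by simp
    qed
    also have "\<dots> = e / (B + 1) * B" by (simp add: B_def)
    also have "\<dots> \<le> e" using e B by (simp add: field_simps)
    finally show ?thesis .
  qed
  then have "integral {0..1} (\<lambda>y. h y * h y) \<le> 0" by (metis field_le_epsilon add_0)
  moreover have "integral {0..1} (\<lambda>y. h y * h y) \<ge> 0" by (rule integral_nonneg[OF int_sq]) auto
  ultimately have "((\<lambda>y. h y * h y) has_integral 0) {0..1}"
    using int_sq by (metis has_integral_integral order.antisym)
  then have "h y * h y = 0"
    using has_integral_0_cbox_imp_0[of 0 1 "\<lambda>y. h y * h y" y] y by (auto intro!: continuous_intros h)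
  then show ?thesis by simp
qed

section \<open>Poisson summation for the Gaussian\<close>

lemma of_nat_le_power2: "real n \<le> real n ^ 2"
  by (cases n) (auto simp: power2_eq_square)

lemma exp_neg_mult_le_power:
  assumes "c \<ge> 0" "real n \<le> t^2"
  shows "exp (-(c*t^2)) \<le> exp (-c) ^ n"
proof -
  have "c * real n \<le> c * t^2" using assms by (intro mult_left_mono) auto
  then show ?thesis by (simp add: exp_of_nat_mult[symmetric] mult_ac)
qed

lemma summable_mult_exp_neg_power: "(c::real) > 0 \<Longrightarrow> summable (\<lambda>n. K * exp (-c) ^ n)"
  by (intro summable_mult summable_geometric) simp

lemma abs_mult_cos_le: "\<bar>c * cos x\<bar> \<le> \<bar>c :: real\<bar>"
  unfolding abs_mult by (rule mult_left_le) auto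

lemma uniform_series_continuous_on:
  fixes f :: "nat \<Rightarrow> real \<Rightarrow> real"
  assumes "\<And>n. continuous_on A (f n)" "\<And>n y. y \<in> A \<Longrightarrow> \<bar>f n y\<bar> \<le> M n" "summable M"
  shows "continuous_on A (\<lambda>y. \<Sum>n. f n y)"
  by (rule uniform_limit_theorem[OF _ Weierstrass_m_test[of A f M]])
     (use assms in \<open>auto intro!: always_eventually continuous_on_sum\<close>)

lemma uniform_series_has_integral:
  fixes f :: "nat \<Rightarrow> real \<Rightarrow> real"
  assumes cont: "\<And>n. continuous_on {a..b} (f n)"
    and bound: "\<And>n y. y \<in> {a..b} \<Longrightarrow> \<bar>f n y\<bar> \<le> M n" and M: "summable M"
    and int: "\<And>n. (f n has_integral I n) {a..b}"
  obtains J where "I sums J" "((\<lambda>y. \<Sum>n. f n y) has_integral J) {a..b}"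
proof -
  have "uniform_limit {a..b} (\<lambda>N y. \<Sum>n<N. f n y) (\<lambda>y. \<Sum>n. f n y) sequentially"
    by (rule Weierstrass_m_test[OF _ M]) (use bound in auto)
  then obtain I' J where I': "\<And>N. ((\<lambda>y. \<Sum>n<N. f n y) has_integral I' N) {a..b}"
    and J: "((\<lambda>y. \<Sum>n. f n y) has_integral J) {a..b}" and lim: "I' \<longlonglongrightarrow> J"
    by (rule uniform_limit_integral) (auto intro!: continuous_on_sum cont)
  have "I' = (\<lambda>N. \<Sum>n<N. I n)"
    using has_integral_unique[OF I' has_integral_sum[OF finite_lessThan int]] by blast
  then have "I sums J" using lim by (simp add: sums_def)
  then show ?thesis using J that by blast
qed

definition gauss :: "real \<Rightarrow> real \<Rightarrow> real" where
  "gauss a t = exp (-(pi*a*t^2))"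

text \<open>The translates of the Gaussian by \<open>n\<close> and by \<open>-(n+1)\<close>: summing over \<open>n\<close> visits
  every integer translate exactly once.\<close>
definition gauss_translates :: "real \<Rightarrow> nat \<Rightarrow> real \<Rightarrow> real" where
  "gauss_translates a n y = gauss a (y + real n) + gauss a (y - real n - 1)"

definition gauss_periodic :: "real \<Rightarrow> real \<Rightarrow> real" where
  "gauss_periodic a y = (\<Sum>n. gauss_translates a n y)"

definition gauss_fourier_coeff :: "real \<Rightarrow> nat \<Rightarrow> real" where
  "gauss_fourier_coeff a n = (if n = 0 then 1 else 2) * exp (-(pi*(real n)^2/a)) / sqrt a"

definition gauss_fourier_series :: "real \<Rightarrow> real \<Rightarrow> real" where
  "gauss_fourier_series a y = (\<Sum>n. gauss_fourier_coeff a n * cos (2*pi*real n*y))"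

lemma gauss_translates_bound:
  assumes a: "a > 0" and y: "y \<in> {0..1}"
  shows "\<bar>gauss_translates a n y\<bar> \<le> 2 * exp (-(pi*a)) ^ n"
proof -
  have "real n ^ 2 \<le> (y + real n)^2" using y by (intro power_mono) auto
  then have "real n \<le> (y + real n)^2" using of_nat_le_power2[of n] by linarith
  then have right: "gauss a (y + real n) \<le> exp (-(pi*a)) ^ n"
    unfolding gauss_def using a by (intro exp_neg_mult_le_power) auto
  have "real n ^ 2 \<le> (real n + 1 - y)^2" using y by (intro power_mono) auto
  then have "real n \<le> (y - real n - 1)^2"
    using of_nat_le_power2[of n] by (simp add: power2_eq_square algebra_simps)
  then have left: "gauss a (y - real n - 1) \<le> exp (-(pi*a)) ^ n"
    unfolding gauss_def using a by (intro exp_neg_mult_le_power) auto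
  show ?thesis using left right unfolding gauss_translates_def by (simp add: gauss_def)
qed

lemma gauss_fourier_coeff_bound:
  assumes a: "a > 0"
  shows "\<bar>gauss_fourier_coeff a n\<bar> \<le> 2 / sqrt a * exp (-(pi/a)) ^ n"
proof -
  have "exp (-((pi/a)*(real n)^2)) \<le> exp (-(pi/a)) ^ n"
    using a of_nat_le_power2[of n] by (intro exp_neg_mult_le_power) auto
  then have "(if n = 0 then 1 else 2) * exp (-(pi*(real n)^2/a)) \<le> 2 * exp (-(pi/a)) ^ n"
    by (intro mult_mono) auto
  then show ?thesis
    using a by (simp add: gauss_fourier_coeff_def abs_mult divide_right_mono)
qed

lemma integral_cos_2pi_int:
  fixes k :: int
  shows "((\<lambda>y. cos (2*pi*k*y)) has_integral (if k = 0 then 1 else 0)) {0..1}"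
proof (cases "k = 0")
  case True
  then show ?thesis using has_integral_const_real[of 1 0 1] by simp
next
  case False
  have "((\<lambda>y. cos (2*pi*k*y)) has_integral (sin (2*pi*k*1)/(2*pi*k) - sin (2*pi*k*0)/(2*pi*k))) {0..1}"
  proof (rule fundamental_theorem_of_calculus)
    fix x :: real
    show "((\<lambda>y. sin (2*pi*k*y)/(2*pi*k)) has_vector_derivative cos (2*pi*k*x)) (at x within {0..1})"
      unfolding has_real_derivative_iff_has_vector_derivative[symmetric]
      using False by (auto intro!: derivative_eq_intros)
  qed simp
  moreover have "sin (2*pi*k*1) = 0" using sin_integer_2pi[of "of_int k"] by simp
  ultimately show ?thesis using False by simp
qed

lemma cos_mult_cos_has_integral:
  fixes n m :: nat
  shows "((\<lambda>y. cos (2*pi*n*y) * cos (2*pi*m*y)) has_integral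
           (if n = m then (if m = 0 then 1 else 1/2) else 0)) {0..1}"
proof -
  have prod: "cos (2*pi*n*y) * cos (2*pi*m*y)
      = 1/2 * cos (2*pi*(int n - int m)*y) + 1/2 * cos (2*pi*(int n + int m)*y)" for y
    unfolding cos_times_cos by (simp add: algebra_simps)
  have "(int n + int m = 0) = (n = 0 \<and> m = 0)" by auto
  then have "((\<lambda>y. 1/2 * cos (2*pi*(int n - int m)*y) + 1/2 * cos (2*pi*(int n + int m)*y)) has_integral
        (1/2 * (if n = m then 1 else 0) + 1/2 * (if n = 0 \<and> m = 0 then 1 else 0))) {0..1}"
    using integral_cos_2pi_int[of "int n - int m"] integral_cos_2pi_int[of "int n + int m"]
    by (intro has_integral_add has_integral_mult_right) simp_all
  then show ?thesis unfolding prod by (auto split: if_splits)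
qed

lemma gauss_fourier_series_cos_coeff:
  fixes m :: nat
  assumes a: "a > 0"
  shows "((\<lambda>y. gauss_fourier_series a y * cos (2*pi*real m*y)) has_integral
           (exp (-(pi*(real m)^2/a)) / sqrt a)) {0..1}"
proof -
  define I where "I n = gauss_fourier_coeff a n * (if n = m then (if m = 0 then 1 else 1/2) else 0)" for n
  define f where "f n y = gauss_fourier_coeff a n * cos (2*pi*real n*y) * cos (2*pi*real m*y)" for n y
  have bound: "\<bar>f n y\<bar> \<le> 2 / sqrt a * exp (-(pi/a)) ^ n" for n y
    using abs_mult_cos_le abs_mult_cos_le[of "gauss_fourier_coeff a n"] gauss_fourier_coeff_bound[OF a]
    unfolding f_def by (meson order_trans)
  have int: "(f n has_integral I n) {0..1}" for n
    unfolding I_def f_def mult.assoc[of "gauss_fourier_coeff a n"]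
    by (rule has_integral_mult_right[OF cos_mult_cos_has_integral])
  have cont: "continuous_on {0..1} (f n)" for n
    unfolding f_def by (intro continuous_intros)
  obtain J where "I sums J" and J: "((\<lambda>y. \<Sum>n. f n y) has_integral J) {0..1}"
    using uniform_series_has_integral[OF cont bound summable_mult_exp_neg_power int] a by auto
  moreover have "I sums (exp (-(pi*(real m)^2/a)) / sqrt a)"
  proof -
    have "I = (\<lambda>n. if n = m then exp (-(pi*(real m)^2/a)) / sqrt a else 0)"
      by (auto simp: I_def gauss_fourier_coeff_def)
    then show ?thesis using sums_single[of m "\<lambda>_. exp (-(pi*(real m)^2/a)) / sqrt a"] by simp
  qed
  ultimately have "J = exp (-(pi*(real m)^2/a)) / sqrt a" by (simp add: sums_iff)
  moreover have "(\<Sum>n. f n y) = gauss_fourier_series a y * cos (2*pi*real m*y)" for y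
  proof -
    have "summable (\<lambda>n. gauss_fourier_coeff a n * cos (2*pi*real n*y))"
      using a abs_mult_cos_le gauss_fourier_coeff_bound[OF a]
      by (intro summable_comparison_test'[OF summable_mult_exp_neg_power[of "pi/a" "2 / sqrt a"]])
         (auto intro: order_trans)
    then show ?thesis unfolding gauss_fourier_series_def f_def by (rule suminf_mult2[symmetric])
  qed
  ultimately show ?thesis using J by simp
qed

lemma cos_2pi_mult_add_int:
  fixes k :: int and m :: nat
  shows "cos (2*pi*real m*(x + real_of_int k)) = cos (2*pi*real m*x)"
proof -
  have "2*pi*real m*(x + real_of_int k) = 2*pi*real m*x + 2*pi*real_of_int (int m * k)"
    by (simp add: algebra_simps)
  moreover have "cos (2*pi*real_of_int (int m * k)) = 1" "sin (2*pi*real_of_int (int m * k)) = 0"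
    by (auto intro: cos_integer_2pi sin_integer_2pi)
  ultimately show ?thesis by (simp add: cos_add)
qed

definition gauss_cos :: "real \<Rightarrow> nat \<Rightarrow> real \<Rightarrow> real" where
  "gauss_cos a m t = gauss a t * cos (2*pi*real m*t)"

lemma continuous_on_gauss_cos: "continuous_on S (gauss_cos a m)"
  unfolding gauss_cos_def gauss_def by (intro continuous_intros)

lemma gauss_cos_integrable: "gauss_cos a m integrable_on {u..v}"
  by (rule integrable_continuous_interval[OF continuous_on_gauss_cos])

lemma integral_gauss_cos_translate:
  fixes k :: int
  shows "integral {0..1} (\<lambda>y. gauss a (y + real_of_int k) * cos (2*pi*real m*y))
       = integral {real_of_int k..real_of_int k + 1} (gauss_cos a m)"
proof -
  have "integral {real_of_int k - real_of_int k..real_of_int k + 1 - real_of_int k}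
          (\<lambda>x. gauss_cos a m (x + real_of_int k)) = integral {real_of_int k..real_of_int k + 1} (gauss_cos a m)"
    by (rule integral_shift_real_ivl)
  moreover have "integral {0..1} (\<lambda>x. gauss_cos a m (x + real_of_int k))
      = integral {0..1} (\<lambda>y. gauss a (y + real_of_int k) * cos (2*pi*real m*y))"
    using cos_2pi_mult_add_int[of m _ k] by (intro integral_cong) (simp add: gauss_cos_def)
  ultimately show ?thesis by simp
qed

lemma integral_gauss_cos_symmetric_interval:
  "(\<Sum>n<N. integral {real n..real n+1} (gauss_cos a m) + integral {-real n - 1..-real n} (gauss_cos a m))
     = integral {-real N..real N} (gauss_cos a m)"
proof (induction N)
  case 0
  then show ?case by simp
next
  case (Suc N)
  have bounds: "real N + 1 = real (Suc N)" "-real N - 1 = -real (Suc N)" by simp_all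
  have "integral {-real (Suc N)..-real N} (gauss_cos a m) + integral {-real N..real (Suc N)} (gauss_cos a m)
      = integral {-real (Suc N)..real (Suc N)} (gauss_cos a m)"
    by (intro Henstock_Kurzweil_Integration.integral_combine gauss_cos_integrable) auto
  moreover have "integral {-real N..real N} (gauss_cos a m) + integral {real N..real (Suc N)} (gauss_cos a m)
      = integral {-real N..real (Suc N)} (gauss_cos a m)"
    by (intro Henstock_Kurzweil_Integration.integral_combine gauss_cos_integrable) auto
  ultimately show ?case by (simp only: sum.lessThan_Suc Suc.IH bounds)
qed

lemma integral_gauss_cos_tendsto:
  assumes a: "a > 0"
  shows "(\<lambda>N. integral {-real N..real N} (gauss_cos a m)) \<longlonglongrightarrow> exp (-(pi*(real m)^2/a)) / sqrt a"
proof -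
  define g where "g N x = (if x \<in> {-real N..real N} then gauss_cos a m x else 0)" for N x
  have "(\<lambda>N. integral UNIV (g N)) \<longlonglongrightarrow> integral UNIV (gauss_cos a m)"
  proof (rule dominated_convergence(2))
    show "gauss a integrable_on UNIV"
      using gaussian_cos_has_integral[OF a, of 0] unfolding gauss_def by (auto simp: integrable_on_def)
    show "g N integrable_on UNIV" for N
      unfolding g_def integrable_restrict_UNIV by (rule gauss_cos_integrable)
    show "norm (g N x) \<le> gauss a x" for N x
      using abs_mult_cos_le[of "gauss a x"] by (auto simp: g_def gauss_cos_def gauss_def)
    show "(\<lambda>N. g N x) \<longlonglongrightarrow> gauss_cos a m x" for x
    proof (rule tendsto_eventually)
      obtain K :: nat where "\<bar>x\<bar> \<le> real K" using real_arch_simple by blast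
      then show "\<forall>\<^sub>F N in sequentially. g N x = gauss_cos a m x"
        unfolding eventually_sequentially by (intro exI[of _ K]) (auto simp: g_def)
    qed
  qed
  moreover have "integral UNIV (g N) = integral {-real N..real N} (gauss_cos a m)" for N
    unfolding g_def by (rule integral_restrict_UNIV)
  moreover have "integral UNIV (gauss_cos a m) = exp (-(pi*(real m)^2/a)) / sqrt a"
    using gaussian_cos_has_integral[OF a, of "real m"] unfolding gauss_cos_def gauss_def
    by (rule integral_unique)
  ultimately show ?thesis by simp
qed

lemma gauss_periodic_cos_coeff:
  fixes m :: nat
  assumes a: "a > 0"
  shows "((\<lambda>y. gauss_periodic a y * cos (2*pi*real m*y)) has_integral (exp (-(pi*(real m)^2/a)) / sqrt a)) {0..1}"
proof -
  define f where "f n y = gauss_translates a n y * cos (2*pi*real m*y)" for n y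
  define I where "I n = integral {real n..real n+1} (gauss_cos a m) + integral {-real n - 1..-real n} (gauss_cos a m)" for n
  have bound: "\<bar>f n y\<bar> \<le> 2 * exp (-(pi*a)) ^ n" if "y \<in> {0..1}" for n y
    unfolding f_def by (rule order_trans[OF abs_mult_cos_le gauss_translates_bound[OF a that]])
  have int: "(f n has_integral I n) {0..1}" for n
  proof -
    have "((\<lambda>y. gauss a (y + real_of_int k) * cos (2*pi*real m*y)) has_integral
            integral {real_of_int k..real_of_int k + 1} (gauss_cos a m)) {0..1}" for k
      unfolding integral_gauss_cos_translate[symmetric]
      by (intro integrable_integral integrable_continuous_interval) (auto simp: gauss_def intro!: continuous_intros)
    from has_integral_add[OF this[of "int n"] this[of "- int n - 1"]] show ?thesis
      unfolding f_def I_def gauss_translates_def by (simp add: algebra_simps)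
  qed
  have cont: "continuous_on {0..1} (f n)" for n
    unfolding f_def gauss_translates_def gauss_def by (intro continuous_intros)
  obtain J where "I sums J" and J: "((\<lambda>y. \<Sum>n. f n y) has_integral J) {0..1}"
    using uniform_series_has_integral[OF cont bound summable_mult_exp_neg_power int] a by auto
  moreover have "I sums (exp (-(pi*(real m)^2/a)) / sqrt a)"
    unfolding sums_def I_def integral_gauss_cos_symmetric_interval by (rule integral_gauss_cos_tendsto[OF a])
  ultimately have "J = exp (-(pi*(real m)^2/a)) / sqrt a" by (simp add: sums_iff)
  moreover have "(\<Sum>n. f n y) = gauss_periodic a y * cos (2*pi*real m*y)" if "y \<in> {0..1}" for y
  proof -
    have "summable (\<lambda>n. gauss_translates a n y)"
      using a gauss_translates_bound[OF a that]
      by (intro summable_comparison_test'[OF summable_mult_exp_neg_power[of "pi*a" 2]]) auto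
    then show ?thesis unfolding gauss_periodic_def f_def by (rule suminf_mult2[symmetric])
  qed
  ultimately show ?thesis using J by (subst has_integral_cong[where g="\<lambda>y. \<Sum>n. f n y"]) auto
qed

lemma continuous_on_gauss_periodic:
  assumes a: "a > 0"
  shows "continuous_on {0..1} (gauss_periodic a)"
  unfolding gauss_periodic_def[abs_def]
  by (rule uniform_series_continuous_on[OF _ gauss_translates_bound[OF a] summable_mult_exp_neg_power])
     (use a in \<open>auto simp: gauss_translates_def gauss_def intro!: continuous_intros\<close>)

lemma continuous_on_gauss_fourier_series:
  assumes a: "a > 0"
  shows "continuous_on {0..1} (gauss_fourier_series a)"
  unfolding gauss_fourier_series_def[abs_def]
  by (rule uniform_series_continuous_on[OF _ order_trans[OF abs_mult_cos_le gauss_fourier_coeff_bound[OF a]]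
        summable_mult_exp_neg_power])
     (use a in \<open>auto intro!: continuous_intros\<close>)

lemma gauss_periodic_reflect: "gauss_periodic a (1 - y) = gauss_periodic a y"
proof -
  have even: "gauss a (-t) = gauss a t" for t by (simp add: gauss_def)
  have "gauss_translates a n (1 - y) = gauss_translates a n y" for n
    using even[of "y - real n - 1"] even[of "y + real n"]
    unfolding gauss_translates_def by (simp add: algebra_simps)
  then show ?thesis by (simp add: gauss_periodic_def)
qed

lemma gauss_fourier_series_reflect: "gauss_fourier_series a (1 - y) = gauss_fourier_series a y"
proof -
  have "cos (2*pi*real n*(1 - y)) = cos (2*pi*real n*y)" for n
    using cos_2pi_mult_add_int[of n "-y" 1] by (simp add: algebra_simps)
  then show ?thesis by (simp add: gauss_fourier_series_def)
qed

theorem gauss_periodic_eq_fourier_series: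
  assumes a: "a > 0" and y: "y \<in> {0..1}"
  shows "gauss_periodic a y = gauss_fourier_series a y"
proof -
  have "(\<lambda>y. gauss_periodic a y - gauss_fourier_series a y) y = 0"
  proof (rule symmetric_cos_orthogonal_imp_zero[OF _ _ _ y])
    show "continuous_on {0..1} (\<lambda>y. gauss_periodic a y - gauss_fourier_series a y)"
      using continuous_on_gauss_periodic[OF a] continuous_on_gauss_fourier_series[OF a]
      by (rule continuous_on_diff)
    show "gauss_periodic a (1 - y) - gauss_fourier_series a (1 - y) = gauss_periodic a y - gauss_fourier_series a y" for y
      by (simp add: gauss_periodic_reflect gauss_fourier_series_reflect)
    show "integral {0..1} (\<lambda>y. (gauss_periodic a y - gauss_fourier_series a y) * cos (2*pi*real m*y)) = 0" for m
      using has_integral_diff[OF gauss_periodic_cos_coeff[OF a, of m] gauss_fourier_series_cos_coeff[OF a, of m]]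
      by (simp add: left_diff_distrib integral_unique)
  qed
  then show ?thesis by simp
qed

definition exp_series :: "(nat \<Rightarrow> real) \<Rightarrow> (nat \<Rightarrow> real) \<Rightarrow> real \<Rightarrow> real" where
  "exp_series c l x = (\<Sum>n. c n * exp (-(l n * x)))"

definition subexp_coeffs :: "(nat \<Rightarrow> real) \<Rightarrow> bool" where
  "subexp_coeffs c \<longleftrightarrow> (\<forall>x>0. summable (\<lambda>n. \<bar>c n\<bar> * exp (-(x * real n))))"

definition quadratic_exponents :: "(nat \<Rightarrow> real) \<Rightarrow> real \<Rightarrow> bool" where
  "quadratic_exponents l K \<longleftrightarrow> (\<forall>n. real n \<le> l n \<and> l n \<le> K * (real n + 1)^2)"

definition deriv_coeffs :: "(nat \<Rightarrow> real) \<Rightarrow> (nat \<Rightarrow> real) \<Rightarrow> nat \<Rightarrow> real" where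
  "deriv_coeffs l c n = - l n * c n"

lemma exp_neg_mult_of_nat: "exp (-(x * real n)) = exp (-x) ^ n"
  by (simp add: exp_of_nat_mult[symmetric] mult_ac)

lemma subexp_coeffs_bounded:
  assumes "\<And>n. \<bar>c n\<bar> \<le> K"
  shows "subexp_coeffs c"
  unfolding subexp_coeffs_def
proof (intro allI impI)
  fix x :: real assume "x > 0"
  then show "summable (\<lambda>n. \<bar>c n\<bar> * exp (-(x * real n)))"
  proof (rule summable_comparison_test'[OF summable_mult_exp_neg_power[of x K]])
    fix n
    show "norm (\<bar>c n\<bar> * exp (-(x * real n))) \<le> K * exp (-x) ^ n"
      unfolding exp_neg_mult_of_nat using assms[of n] by (simp add: mult_right_mono)
  qed
qed

lemma power2_Suc_le_exp:
  assumes x: "x > 0"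
  shows "(real n + 1)^2 \<le> 8 / x^2 * exp (x/2) * exp (x/2 * real n)"
proof -
  define t where "t = x * (real n + 1) / 2"
  have "t \<ge> 0" using x by (simp add: t_def)
  then have "t^2/2 \<le> exp t" using exp_lower_Taylor_quadratic[of t] by simp
  moreover have "t^2/2 = x^2/8 * (real n + 1)^2" by (simp add: t_def power2_eq_square field_simps)
  moreover have "exp t = exp (x/2) * exp (x/2 * real n)" by (simp add: t_def exp_add[symmetric] algebra_simps)
  ultimately show ?thesis using x by (simp add: field_simps)
qed

lemma subexp_coeffs_mult:
  assumes c: "subexp_coeffs c" and d: "\<And>n. \<bar>d n\<bar> \<le> K * (real n + 1)^2"
  shows "subexp_coeffs (\<lambda>n. d n * c n)"
  unfolding subexp_coeffs_def
proof (intro allI impI)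
  fix x :: real assume x: "x > 0"
  define B where "B = K * (8 / x^2 * exp (x/2))"
  have K: "K \<ge> 0" using d[of 0] abs_ge_zero[of "d 0"] by simp
  have bound: "norm (\<bar>d n * c n\<bar> * exp (-(x * real n))) \<le> B * (\<bar>c n\<bar> * exp (-(x/2 * real n)))" for n
  proof -
    have d_bound: "\<bar>d n\<bar> \<le> B * exp (x/2 * real n)"
      using d[of n] mult_left_mono[OF power2_Suc_le_exp[OF x, of n] K] by (simp add: B_def mult_ac)
    have "norm (\<bar>d n * c n\<bar> * exp (-(x * real n))) = \<bar>d n\<bar> * (\<bar>c n\<bar> * exp (-(x * real n)))"
      by (simp add: abs_mult mult_ac)
    also have "\<dots> \<le> B * exp (x/2 * real n) * (\<bar>c n\<bar> * exp (-(x * real n)))"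
      by (rule mult_right_mono[OF d_bound]) simp
    also have "\<dots> = B * \<bar>c n\<bar> * (exp (x/2 * real n) * exp (-(x * real n)))"
      by (simp only: mult_ac)
    also have "\<dots> = B * (\<bar>c n\<bar> * exp (-(x/2 * real n)))"
      by (simp add: exp_add[symmetric])
    finally show ?thesis .
  qed
  have "summable (\<lambda>n. \<bar>c n\<bar> * exp (-(x/2 * real n)))"
    using c half_gt_zero[OF x] unfolding subexp_coeffs_def by blast
  then show "summable (\<lambda>n. \<bar>d n * c n\<bar> * exp (-(x * real n)))"
    by (rule summable_comparison_test'[OF summable_mult[of _ B]]) (rule bound)
qed

lemma subexp_coeffs_shift:
  assumes "subexp_coeffs c"
  shows "subexp_coeffs (\<lambda>n. c (Suc n))"
  unfolding subexp_coeffs_def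
proof (intro allI impI)
  fix x :: real assume "x > 0"
  then have "summable (\<lambda>n. \<bar>c (Suc n)\<bar> * exp (-(x * real (Suc n))))"
    using assms summable_Suc_iff[where f="\<lambda>n. \<bar>c n\<bar> * exp (-(x * real n))"]
    unfolding subexp_coeffs_def by simp
  then have "summable (\<lambda>n. exp x * (\<bar>c (Suc n)\<bar> * exp (-(x * real (Suc n)))))"
    by (rule summable_mult)
  moreover have "(\<lambda>n. exp x * (\<bar>c (Suc n)\<bar> * exp (-(x * real (Suc n)))))
      = (\<lambda>n. \<bar>c (Suc n)\<bar> * exp (-(x * real n)))"
  proof
    fix n
    have "exp x * exp (-(x * real (Suc n))) = exp (-(x * real n))"
      by (simp add: algebra_simps flip: exp_add)
    then show "exp x * (\<bar>c (Suc n)\<bar> * exp (-(x * real (Suc n)))) = \<bar>c (Suc n)\<bar> * exp (-(x * real n))"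
      by (metis mult.left_commute)
  qed
  ultimately show "summable (\<lambda>n. \<bar>c (Suc n)\<bar> * exp (-(x * real n)))" by (simp only:)
qed

lemma subexp_coeffs_summable_powser:
  assumes c: "subexp_coeffs c" and z: "\<bar>z\<bar> < 1"
  shows "summable (\<lambda>n. c n * z^n)"
proof (cases "z = 0")
  case False
  have "- ln \<bar>z\<bar> > 0" using False z by simp
  then have "summable (\<lambda>n. \<bar>c n\<bar> * exp (-(- ln \<bar>z\<bar> * real n)))"
    using c unfolding subexp_coeffs_def by blast
  moreover have "exp (-(- ln \<bar>z\<bar> * real n)) = \<bar>z\<bar> ^ n" for n
    using False by (simp add: mult.commute[of _ "real n"] exp_of_nat_mult)
  ultimately have "summable (\<lambda>n. \<bar>c n * z^n\<bar>)" by (simp add: abs_mult power_abs)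
  then show ?thesis by (rule summable_rabs_cancel)
qed simp

lemma quadratic_exponents_abs_le: "quadratic_exponents l K \<Longrightarrow> \<bar>l n\<bar> \<le> K * (real n + 1)^2"
  unfolding quadratic_exponents_def by (metis abs_of_nonneg of_nat_0_le_iff order.trans)

lemma subexp_coeffs_deriv_coeffs:
  "subexp_coeffs c \<Longrightarrow> quadratic_exponents l K \<Longrightarrow> subexp_coeffs (deriv_coeffs l c)"
  unfolding deriv_coeffs_def by (rule subexp_coeffs_mult) (auto dest: quadratic_exponents_abs_le)

lemma exp_series_term_bound:
  assumes "quadratic_exponents l K" "x > 0" "y \<ge> x"
  shows "\<bar>c n * exp (-(l n * y))\<bar> \<le> \<bar>c n\<bar> * exp (-(x * real n))"
proof -
  have "x * real n \<le> y * real n" using assms by (intro mult_right_mono) auto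
  also have "\<dots> \<le> y * l n" using assms unfolding quadratic_exponents_def by (intro mult_left_mono) auto
  finally show ?thesis by (simp add: abs_mult mult_left_mono mult_ac)
qed

lemma summable_exp_series:
  assumes "subexp_coeffs c" "quadratic_exponents l K" "x > 0"
  shows "summable (\<lambda>n. c n * exp (-(l n * x)))"
proof (rule summable_rabs_cancel)
  have "summable (\<lambda>n. \<bar>c n\<bar> * exp (-(x * real n)))"
    using assms(1,3) unfolding subexp_coeffs_def by blast
  then show "summable (\<lambda>n. \<bar>c n * exp (-(l n * x))\<bar>)"
    by (rule summable_comparison_test') (simp add: exp_series_term_bound[OF assms(2,3)])
qed

lemma exp_series_sums:
  "subexp_coeffs c \<Longrightarrow> quadratic_exponents l K \<Longrightarrow> x > 0 \<Longrightarrow> (\<lambda>n. c n * exp (-(l n * x))) sums exp_series c l x"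
  unfolding exp_series_def by (rule summable_sums[OF summable_exp_series])

lemma exp_series_has_derivative:
  assumes c: "subexp_coeffs c" and l: "quadratic_exponents l K" and x: "x > 0"
  shows "(exp_series c l has_real_derivative exp_series (deriv_coeffs l c) l x) (at x)"
proof -
  define S where "S = {x/2<..}"
  have c': "subexp_coeffs (deriv_coeffs l c)" by (rule subexp_coeffs_deriv_coeffs[OF c l])
  have "((\<lambda>y. c n * exp (-(l n * y))) has_field_derivative deriv_coeffs l c n * exp (-(l n * y))) (at y within S)"
    for n y
    by (auto intro!: derivative_eq_intros simp: deriv_coeffs_def algebra_simps)
  moreover have "uniformly_convergent_on S (\<lambda>N y. \<Sum>n<N. deriv_coeffs l c n * exp (-(l n * y)))"
  proof (rule Weierstrass_m_test')
    show "summable (\<lambda>n. \<bar>deriv_coeffs l c n\<bar> * exp (-(x/2 * real n)))"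
      using c' half_gt_zero[OF x] unfolding subexp_coeffs_def by blast
    show "norm (deriv_coeffs l c n * exp (-(l n * y))) \<le> \<bar>deriv_coeffs l c n\<bar> * exp (-(x/2 * real n))"
      if "y \<in> S" for n y
      using exp_series_term_bound[OF l, of "x/2" y] that x by (auto simp: S_def)
  qed
  ultimately have "((\<lambda>y. \<Sum>n. c n * exp (-(l n * y))) has_field_derivative
      (\<Sum>n. deriv_coeffs l c n * exp (-(l n * x)))) (at x)"
    using x summable_exp_series[OF c l x]
    by (intro has_field_derivative_series'(2)[of S]) (auto simp: S_def interior_open[OF open_greaterThan])
  then show ?thesis unfolding exp_series_def[abs_def] .
qed

section \<open>Theta functions and their transformation law\<close>

definition sq_exponent :: "nat \<Rightarrow> real" where
  "sq_exponent n = pi * (real n)^2"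

definition pronic_exponent :: "nat \<Rightarrow> real" where
  "pronic_exponent n = pi * (real n * (real n + 1))"

definition theta3_coeff :: "nat \<Rightarrow> real" where
  "theta3_coeff n = (if n = 0 then 1 else 2)"

definition theta4_coeff :: "nat \<Rightarrow> real" where
  "theta4_coeff n = (if n = 0 then 1 else 2 * (-1)^n)"

text \<open>With \<open>q = exp (-\<pi>x)\<close>: \<open>Theta3 x = \<theta>\<^sub>3(q)\<close>, \<open>Theta4 x = \<theta>\<^sub>4(q)\<close> and
  \<open>\<theta>\<^sub>2(q) = 2 q\<^sup>1\<^sup>/\<^sup>4 Theta2_core x\<close>.\<close>
definition Theta3 :: "real \<Rightarrow> real" where
  "Theta3 = exp_series theta3_coeff sq_exponent"

definition Theta4 :: "real \<Rightarrow> real" where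
  "Theta4 = exp_series theta4_coeff sq_exponent"

definition Theta2_core :: "real \<Rightarrow> real" where
  "Theta2_core = exp_series (\<lambda>_. 1) pronic_exponent"

lemma quadratic_exponents_sq_exponent: "quadratic_exponents sq_exponent pi"
  unfolding quadratic_exponents_def sq_exponent_def
proof
  fix n
  have "real n \<le> 1 * (real n)^2" using of_nat_le_power2[of n] by simp
  also have "\<dots> \<le> pi * (real n)^2" by (intro mult_right_mono) (use pi_ge_two in auto)
  finally show "real n \<le> pi * (real n)\<^sup>2 \<and> pi * (real n)\<^sup>2 \<le> pi * (real n + 1)\<^sup>2"
    by (auto intro!: mult_left_mono power_mono)
qed

lemma quadratic_exponents_pronic_exponent: "quadratic_exponents pronic_exponent pi"
  unfolding quadratic_exponents_def pronic_exponent_def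
proof
  fix n
  have "real n \<le> 1 * (real n * (real n + 1))" by (cases n) (auto simp: algebra_simps)
  also have "\<dots> \<le> pi * (real n * (real n + 1))" by (intro mult_right_mono) (use pi_ge_two in auto)
  finally show "real n \<le> pi * (real n * (real n + 1)) \<and> pi * (real n * (real n + 1)) \<le> pi * (real n + 1)\<^sup>2"
    by (auto intro!: mult_left_mono simp: power2_eq_square)
qed

lemma subexp_coeffs_theta3_coeff: "subexp_coeffs theta3_coeff"
  by (rule subexp_coeffs_bounded[of _ 2]) (simp add: theta3_coeff_def)

lemma subexp_coeffs_theta4_coeff: "subexp_coeffs theta4_coeff"
  by (rule subexp_coeffs_bounded[of _ 2]) (simp add: theta4_coeff_def abs_mult power_abs)

lemma subexp_coeffs_const: "subexp_coeffs (\<lambda>_. c)"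
  by (rule subexp_coeffs_bounded[of _ "\<bar>c\<bar>"]) simp

lemma Theta3_eq:
  assumes x: "x > 0"
  shows "Theta3 x = 1 + 2 * (\<Sum>n. exp (-(sq_exponent (Suc n) * x)))"
proof -
  have "summable (\<lambda>n. exp (-(sq_exponent (Suc n) * x)))"
    using summable_exp_series[OF subexp_coeffs_const[of 1] quadratic_exponents_sq_exponent x]
    by (subst summable_Suc_iff) simp
  moreover have "Theta3 x = theta3_coeff 0 * exp (-(sq_exponent 0 * x))
      + (\<Sum>n. theta3_coeff (Suc n) * exp (-(sq_exponent (Suc n) * x)))"
    unfolding Theta3_def exp_series_def
    using suminf_split_head[OF summable_exp_series[OF subexp_coeffs_theta3_coeff quadratic_exponents_sq_exponent x]]
    by simp
  ultimately show ?thesis by (simp add: theta3_coeff_def sq_exponent_def suminf_mult)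
qed

lemma Theta4_eq:
  assumes x: "x > 0"
  shows "Theta4 x = 1 + 2 * (\<Sum>n. (-1) ^ Suc n * exp (-(sq_exponent (Suc n) * x)))"
proof -
  have "summable (\<lambda>n. (-1) ^ n * exp (-(sq_exponent n * x)))"
    using summable_exp_series[OF subexp_coeffs_bounded[of "\<lambda>n. (-1) ^ n" 1] quadratic_exponents_sq_exponent x]
    by simp
  then have "summable (\<lambda>n. (-1) ^ Suc n * exp (-(sq_exponent (Suc n) * x)))"
    by (subst summable_Suc_iff)
  moreover have "Theta4 x = theta4_coeff 0 * exp (-(sq_exponent 0 * x))
      + (\<Sum>n. theta4_coeff (Suc n) * exp (-(sq_exponent (Suc n) * x)))"
    unfolding Theta4_def exp_series_def
    using suminf_split_head[OF summable_exp_series[OF subexp_coeffs_theta4_coeff quadratic_exponents_sq_exponent x]]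
    by simp
  ultimately show ?thesis
    by (simp add: theta4_coeff_def sq_exponent_def suminf_mult mult.assoc del: power_Suc)
qed

lemma Theta3_inverse:
  assumes x: "x > 0"
  shows "Theta3 x = Theta3 (1/x) / sqrt x"
proof -
  define e where "e n = exp (-(sq_exponent n * x))" for n
  have e: "summable e"
    unfolding e_def using summable_exp_series[OF subexp_coeffs_const[of 1] quadratic_exponents_sq_exponent x] by simp
  have "gauss x (real n) = e n" "gauss x (- real n - 1) = e (Suc n)" for n
    by (auto simp: gauss_def e_def sq_exponent_def power2_eq_square algebra_simps)
  then have "gauss_periodic x 0 = (\<Sum>n. e n + e (Suc n))"
    by (simp add: gauss_periodic_def gauss_translates_def)
  also have "\<dots> = e 0 + 2 * (\<Sum>n. e (Suc n))"
    using e suminf_split_head[OF e] by (simp add: suminf_add[symmetric] summable_Suc_iff)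
  also have "\<dots> = Theta3 x" by (simp add: Theta3_eq[OF x] e_def sq_exponent_def)
  finally have "gauss_periodic x 0 = Theta3 x" .
  moreover have "gauss_fourier_series x 0 = Theta3 (1/x) / sqrt x"
  proof -
    have "gauss_fourier_series x 0 = (\<Sum>n. theta3_coeff n * exp (-(sq_exponent n * (1/x))) / sqrt x)"
      unfolding gauss_fourier_series_def
      by (intro suminf_cong) (simp add: gauss_fourier_coeff_def theta3_coeff_def sq_exponent_def)
    also have "\<dots> = Theta3 (1/x) / sqrt x"
      unfolding Theta3_def exp_series_def
      using summable_exp_series[OF subexp_coeffs_theta3_coeff quadratic_exponents_sq_exponent, of "1/x"] x
      by (auto intro!: suminf_divide)
    finally show ?thesis .
  qed
  ultimately show ?thesis using gauss_periodic_eq_fourier_series[OF x, of 0] by simp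
qed

lemma Theta4_inverse:
  assumes x: "x > 0"
  shows "Theta4 (1/x) = 2 * sqrt x * exp (-(pi*x/4)) * Theta2_core x"
proof -
  have "gauss_translates x n (1/2) = 2 * exp (-(pi*x/4)) * exp (-(pronic_exponent n * x))" for n
  proof -
    have "gauss x (1/2 + real n) = exp (-(pi*x/4)) * exp (-(pronic_exponent n * x))"
      "gauss x (1/2 - real n - 1) = exp (-(pi*x/4)) * exp (-(pronic_exponent n * x))"
      by (simp_all add: gauss_def pronic_exponent_def power2_eq_square algebra_simps flip: exp_add)
    then show ?thesis by (simp add: gauss_translates_def)
  qed
  then have "gauss_periodic x (1/2) = 2 * exp (-(pi*x/4)) * Theta2_core x"
    unfolding gauss_periodic_def Theta2_core_def exp_series_def
    using summable_exp_series[OF subexp_coeffs_const[of 1] quadratic_exponents_pronic_exponent x]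
    by (simp add: suminf_mult)
  moreover have "gauss_fourier_series x (1/2) = Theta4 (1/x) / sqrt x"
  proof -
    have "gauss_fourier_series x (1/2) = (\<Sum>n. theta4_coeff n * exp (-(sq_exponent n * (1/x))) / sqrt x)"
      unfolding gauss_fourier_series_def
    proof (intro suminf_cong)
      fix n
      have "cos (2*pi*real n*(1/2)) = (-1)^n" using cos_npi[of n] by (simp add: mult_ac)
      then show "gauss_fourier_coeff x n * cos (2*pi*real n*(1/2))
          = theta4_coeff n * exp (-(sq_exponent n * (1/x))) / sqrt x"
        by (simp add: gauss_fourier_coeff_def theta4_coeff_def sq_exponent_def)
    qed
    also have "\<dots> = Theta4 (1/x) / sqrt x"
      unfolding Theta4_def exp_series_def
      using summable_exp_series[OF subexp_coeffs_theta4_coeff quadratic_exponents_sq_exponent, of "1/x"] x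
      by (auto intro!: suminf_divide)
    finally show ?thesis .
  qed
  ultimately show ?thesis using gauss_periodic_eq_fourier_series[OF x, of "1/2"] x by (simp add: field_simps)
qed

lemma infsum_int_even:
  fixes f :: "int \<Rightarrow> real"
  assumes even: "\<And>k. f (-k) = f k" and summable: "summable (\<lambda>n. \<bar>f (int n)\<bar>)"
  shows "(\<Sum>\<^sub>\<infinity>k. f k) = f 0 + 2 * (\<Sum>n. f (int (Suc n)))"
proof -
  define g where "g n = - int (Suc n)" for n
  have summable_Suc: "summable (\<lambda>n. \<bar>f (int (Suc n))\<bar>)"
    using summable summable_Suc_iff[where f="\<lambda>n. \<bar>f (int n)\<bar>"] by simp
  have "((f \<circ> int) has_sum (\<Sum>n. f (int n))) UNIV"
    using norm_summable_imp_has_sum[of "f \<circ> int"] summable summable_rabs_cancel[OF summable]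
    by (simp add: o_def summable_sums)
  then have nonneg: "(f has_sum (\<Sum>n. f (int n))) (range int)"
    by (subst has_sum_reindex) (auto simp: inj_on_def)
  have "f \<circ> g = (\<lambda>n. f (int (Suc n)))" by (rule ext) (simp only: o_def g_def even)
  then have "((f \<circ> g) has_sum (\<Sum>n. f (int (Suc n)))) UNIV"
    using norm_summable_imp_has_sum[of "\<lambda>n. f (int (Suc n))"] summable_Suc summable_rabs_cancel[OF summable_Suc]
    by (simp add: summable_sums)
  then have neg: "(f has_sum (\<Sum>n. f (int (Suc n)))) (range g)"
    by (subst has_sum_reindex) (auto simp: inj_on_def g_def)
  have "range int \<inter> range g = {}" by (auto simp: g_def)
  moreover have "range int \<union> range g = UNIV"
  proof -
    have "k \<in> range int \<union> range g" for k :: int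
    proof (cases "k \<ge> 0")
      case True
      then show ?thesis by (metis UnI1 nonneg_int_cases rangeI)
    next
      case False
      then have "k = g (nat (-k - 1))" by (simp add: g_def)
      then show ?thesis by blast
    qed
    then show ?thesis by blast
  qed
  ultimately have "(f has_sum ((\<Sum>n. f (int n)) + (\<Sum>n. f (int (Suc n))))) UNIV"
    using has_sum_Un_disjoint[OF nonneg neg] by simp
  then have "(\<Sum>\<^sub>\<infinity>k. f k) = (\<Sum>n. f (int n)) + (\<Sum>n. f (int (Suc n)))" by (rule infsumI)
  also have "(\<Sum>n. f (int n)) = f 0 + (\<Sum>n. f (int (Suc n)))"
    using suminf_split_head[OF summable_rabs_cancel[OF summable]] by simp
  finally show ?thesis by simp
qed

lemma exp_neg_pi_power_sq: "exp (-(pi*x)) ^ nat (int n * int n) = exp (-(sq_exponent n * x))"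
  by (simp add: exp_of_nat_mult[symmetric] nat_mult_distrib sq_exponent_def power2_eq_square mult_ac)

lemma theta3_exp_eq_Theta3:
  assumes x: "x > 0"
  shows "theta3 (exp (-(pi*x))) = Theta3 x"
proof -
  have "theta3 (exp (-(pi*x))) = exp (-(pi*x)) ^ nat (0*0)
      + 2 * (\<Sum>n. exp (-(pi*x)) ^ nat (int (Suc n) * int (Suc n)))"
    unfolding theta3_def
  proof (rule infsum_int_even)
    show "summable (\<lambda>n. \<bar>exp (-(pi*x)) ^ nat (int n * int n)\<bar>)"
      using summable_exp_series[OF subexp_coeffs_const[of 1] quadratic_exponents_sq_exponent x]
      by (simp add: exp_neg_pi_power_sq)
  qed simp
  also have "\<dots> = Theta3 x" by (simp only: exp_neg_pi_power_sq Theta3_eq[OF x]) simp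
  finally show ?thesis .
qed

lemma theta4_exp_eq_Theta4:
  assumes x: "x > 0"
  shows "theta4 (exp (-(pi*x))) = Theta4 x"
proof -
  have "theta4 (exp (-(pi*x))) = (-1) ^ nat \<bar>0\<bar> * exp (-(pi*x)) ^ nat (0*0)
      + 2 * (\<Sum>n. (-1) ^ nat \<bar>int (Suc n)\<bar> * exp (-(pi*x)) ^ nat (int (Suc n) * int (Suc n)))"
    unfolding theta4_def
  proof (rule infsum_int_even)
    show "summable (\<lambda>n. \<bar>(-1) ^ nat \<bar>int n\<bar> * exp (-(pi*x)) ^ nat (int n * int n)\<bar>)"
      using summable_exp_series[OF subexp_coeffs_const[of 1] quadratic_exponents_sq_exponent x]
      by (simp add: exp_neg_pi_power_sq abs_mult power_abs)
  qed simp
  also have "\<dots> = Theta4 x"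
    by (simp only: exp_neg_pi_power_sq Theta4_eq[OF x] nat_int abs_of_nat) simp
  finally show ?thesis .
qed

lemma DERIV_pos_interior_imp_less:
  fixes f :: "real \<Rightarrow> real"
  assumes "a < b"
    and deriv: "\<And>y. a \<le> y \<Longrightarrow> y \<le> b \<Longrightarrow> (f has_real_derivative f' y) (at y)"
    and pos: "\<And>y. a < y \<Longrightarrow> y < b \<Longrightarrow> f' y > 0"
  shows "f a < f b"
proof (rule DERIV_pos_imp_increasing_open[OF \<open>a < b\<close>])
  show "\<exists>d. (f has_real_derivative d) (at y) \<and> d > 0" if "a < y" "y < b" for y
    using deriv[of y] pos[of y] that by auto
  show "continuous_on {a..b} f"
  proof (intro continuous_at_imp_continuous_on ballI)
    fix y assume "y \<in> {a..b}"
    then show "isCont f y" using deriv[of y] DERIV_isCont by auto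
  qed
qed

lemma DERIV_neg_interior_imp_less:
  fixes f :: "real \<Rightarrow> real"
  assumes "a < b"
    and deriv: "\<And>y. a \<le> y \<Longrightarrow> y \<le> b \<Longrightarrow> (f has_real_derivative f' y) (at y)"
    and neg: "\<And>y. a < y \<Longrightarrow> y < b \<Longrightarrow> f' y < 0"
  shows "f b < f a"
proof -
  have "(\<lambda>y. - f y) a < (\<lambda>y. - f y) b"
  proof (rule DERIV_pos_interior_imp_less[OF \<open>a < b\<close>])
    show "((\<lambda>y. - f y) has_real_derivative - f' y) (at y)" if "a \<le> y" "y \<le> b" for y
      using DERIV_minus[OF deriv[OF that]] .
    show "- f' y > 0" if "a < y" "y < b" for y
      using neg[OF that] by simp
  qed
  then show ?thesis by simp
qed

lemma deriv_at_1_eq_0_if_inverse_symmetric: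
  fixes f :: "real \<Rightarrow> real"
  assumes deriv: "(f has_real_derivative D) (at 1)" and sym: "\<And>x. x > 0 \<Longrightarrow> f (1/x) = f x"
  shows "D = 0"
proof -
  have "((\<lambda>x. 1/x) has_real_derivative - 1) (at (1::real))"
    by (auto intro!: derivative_eq_intros)
  moreover have "(f has_real_derivative D) (at (1/1))" using deriv by simp
  ultimately have "((\<lambda>x. f (1/x)) has_real_derivative D * (- 1)) (at 1)"
    by (rule DERIV_chain2[rotated])
  moreover have "((\<lambda>x. f (1/x)) has_real_derivative D) (at 1)"
    by (rule has_field_derivative_transform_within_open[OF deriv, of "{0<..}"]) (auto simp: sym)
  ultimately have "D * (-1) = D" using DERIV_unique by blast
  then show ?thesis by simp
qed

lemma inverse_symmetric_strict_max:
  fixes f :: "real \<Rightarrow> real"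
  assumes sym: "\<And>x. x > 0 \<Longrightarrow> f (1/x) = f x" and less: "\<And>x. x > 1 \<Longrightarrow> f x < f 1"
    and x: "x > 0"
  shows "f x \<le> f 1" and "f x = f 1 \<longleftrightarrow> x = 1"
proof -
  have "f x < f 1" if "x \<noteq> 1"
  proof (cases "x > 1")
    case False
    then have "1/x > 1" using x that by (simp add: field_simps)
    then show ?thesis using less[of "1/x"] sym[OF x] by simp
  qed (rule less)
  then show "f x \<le> f 1" "f x = f 1 \<longleftrightarrow> x = 1" by force+
qed

lemma reflect_symmetric_strict_max:
  fixes f :: "real \<Rightarrow> real"
  assumes sym: "\<And>t. f (1 - t) = f t" and less: "\<And>t. 0 < t \<Longrightarrow> t < 1/2 \<Longrightarrow> f t < f (1/2)"
    and t: "0 < t" "t < 1" "t \<noteq> 1/2"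
  shows "f t < f (1/2)"
proof (cases "t < 1/2")
  case False
  then show ?thesis using less[of "1 - t"] sym[of t] t by simp
qed (use less t in simp)

section \<open>The product \<open>\<theta>\<^sub>3(e\<^sup>-\<^sup>\<pi>\<^sup>x) \<theta>\<^sub>3(e\<^sup>-\<^sup>\<pi>\<^sup>/\<^sup>x)\<close> is minimal at \<open>x = 1\<close>\<close>

definition Theta3' :: "real \<Rightarrow> real" where
  "Theta3' = exp_series (deriv_coeffs sq_exponent theta3_coeff) sq_exponent"

definition Theta3'' :: "real \<Rightarrow> real" where
  "Theta3'' = exp_series (deriv_coeffs sq_exponent (deriv_coeffs sq_exponent theta3_coeff)) sq_exponent"

lemmas subexp_coeffs_Theta3' =
  subexp_coeffs_deriv_coeffs[OF subexp_coeffs_theta3_coeff quadratic_exponents_sq_exponent]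

lemma Theta3_has_derivative: "x > 0 \<Longrightarrow> (Theta3 has_real_derivative Theta3' x) (at x)"
  unfolding Theta3_def Theta3'_def
  by (rule exp_series_has_derivative[OF subexp_coeffs_theta3_coeff quadratic_exponents_sq_exponent])

lemma Theta3'_has_derivative: "x > 0 \<Longrightarrow> (Theta3' has_real_derivative Theta3'' x) (at x)"
  unfolding Theta3'_def Theta3''_def
  by (rule exp_series_has_derivative[OF subexp_coeffs_Theta3' quadratic_exponents_sq_exponent])

lemma Theta3_pos: "x > 0 \<Longrightarrow> Theta3 x > 0"
  unfolding Theta3_def exp_series_def
  by (rule suminf_pos2[OF summable_exp_series[OF subexp_coeffs_theta3_coeff quadratic_exponents_sq_exponent], of _ 0])
     (auto simp: theta3_coeff_def)

text \<open>Termwise, \<open>5/4 \<theta>' + x \<theta>''\<close> has coefficients \<open>c\<^sub>n \<lambda>\<^sub>n (x \<lambda>\<^sub>n - 5/4)\<close> with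
  \<open>\<lambda>\<^sub>n = \<pi>n\<^sup>2\<close>, and \<open>x \<lambda>\<^sub>n \<ge> \<pi> > 5/4\<close> for \<open>n \<ge> 1\<close>.\<close>
lemma Theta3_deriv_combination_pos:
  assumes x: "x \<ge> 1"
  shows "5/4 * Theta3' x + x * Theta3'' x > 0"
proof -
  define t where "t n = theta3_coeff n * sq_exponent n * (x * sq_exponent n - 5/4) * exp (-(sq_exponent n * x))" for n
  have "(\<lambda>n. 5/4 * (deriv_coeffs sq_exponent theta3_coeff n * exp (-(sq_exponent n * x)))
            + x * (deriv_coeffs sq_exponent (deriv_coeffs sq_exponent theta3_coeff) n * exp (-(sq_exponent n * x))))
        sums (5/4 * Theta3' x + x * Theta3'' x)"
    unfolding Theta3'_def Theta3''_def using x
    by (intro sums_add sums_mult exp_series_sums[OF _ quadratic_exponents_sq_exponent]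
        subexp_coeffs_deriv_coeffs[OF subexp_coeffs_Theta3' quadratic_exponents_sq_exponent] subexp_coeffs_Theta3') auto
  moreover have "(\<lambda>n. 5/4 * (deriv_coeffs sq_exponent theta3_coeff n * exp (-(sq_exponent n * x)))
            + x * (deriv_coeffs sq_exponent (deriv_coeffs sq_exponent theta3_coeff) n * exp (-(sq_exponent n * x))))
        = t"
    by (auto simp: fun_eq_iff t_def deriv_coeffs_def algebra_simps)
  ultimately have sums: "t sums (5/4 * Theta3' x + x * Theta3'' x)" by simp
  have factor_pos: "x * sq_exponent n - 5/4 > 0" if "n \<ge> 1" for n
  proof -
    have "1 * (1 * pi) \<le> x * ((real n)^2 * pi)"
      using x that by (intro mult_mono) auto
    then have "pi \<le> x * sq_exponent n" by (simp add: sq_exponent_def mult_ac)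
    then show ?thesis using pi_gt3 by linarith
  qed
  have "t n \<ge> 0" for n
    using factor_pos[of n] by (cases "n = 0") (auto simp: t_def sq_exponent_def theta3_coeff_def)
  moreover have "t 1 > 0"
    using factor_pos[of 1]
    by (simp add: t_def sq_exponent_def theta3_coeff_def)
  ultimately have "0 < suminf t" by (intro suminf_pos2[OF sums_summable[OF sums]])
  then show ?thesis using sums by (simp add: sums_iff)
qed

definition Theta3_prod :: "real \<Rightarrow> real" where
  "Theta3_prod x = Theta3 x * Theta3 (1/x)"

lemma Theta3_prod_eq: "x > 0 \<Longrightarrow> Theta3_prod x = sqrt x * Theta3 x ^ 2"
  using Theta3_inverse[of x] by (simp add: Theta3_prod_def power2_eq_square field_simps)

lemma Theta3_prod_has_derivative:
  assumes x: "x > 0"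
  shows "(Theta3_prod has_real_derivative (2 * Theta3 x / sqrt x) * (Theta3 x / 4 + x * Theta3' x)) (at x)"
proof -
  have "((\<lambda>x. sqrt x * Theta3 x ^ 2) has_real_derivative
          (inverse (sqrt x) / 2 * Theta3 x ^ 2 + sqrt x * (2 * Theta3 x * Theta3' x))) (at x)"
    using x by (auto intro!: derivative_eq_intros Theta3_has_derivative simp: power2_eq_square)
  moreover have "inverse (sqrt x) / 2 * Theta3 x ^ 2 + sqrt x * (2 * Theta3 x * Theta3' x)
      = (2 * Theta3 x / sqrt x) * (Theta3 x / 4 + x * Theta3' x)"
    using x by (simp add: field_simps power2_eq_square)
  ultimately show ?thesis
    using x by (auto intro: has_field_derivative_transform_within_open[of _ _ _ "{0<..}"] simp: Theta3_prod_eq)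
qed

lemma Theta3_prod_gt_1:
  assumes x: "x > 1"
  shows "Theta3_prod 1 < Theta3_prod x"
proof -
  have "(2 * Theta3 1 / sqrt 1) * (Theta3 1 / 4 + 1 * Theta3' 1) = 0"
    by (rule deriv_at_1_eq_0_if_inverse_symmetric[OF Theta3_prod_has_derivative])
       (simp_all add: Theta3_prod_def mult.commute)
  then have at_1: "Theta3 1 / 4 + 1 * Theta3' 1 = 0" using Theta3_pos[of 1] by simp
  have "Theta3 1 / 4 + 1 * Theta3' 1 < Theta3 y / 4 + y * Theta3' y" if "y > 1" for y
  proof (rule DERIV_pos_interior_imp_less[OF that])
    show "((\<lambda>t. Theta3 t / 4 + t * Theta3' t) has_real_derivative 5/4 * Theta3' t + t * Theta3'' t) (at t)"
      if "1 \<le> t" for t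
      using that by (auto intro!: derivative_eq_intros Theta3_has_derivative Theta3'_has_derivative)
    show "5/4 * Theta3' t + t * Theta3'' t > 0" if "1 < t" for t
      using Theta3_deriv_combination_pos that by simp
  qed
  then have "Theta3 y / 4 + y * Theta3' y > 0" if "y > 1" for y using at_1 that by simp
  then show ?thesis
    using x Theta3_pos
    by (intro DERIV_pos_interior_imp_less[OF x Theta3_prod_has_derivative]) auto
qed

lemma Theta3_prod_strict_min:
  assumes "x > 0"
  shows "Theta3_prod 1 \<le> Theta3_prod x" and "Theta3_prod x = Theta3_prod 1 \<longleftrightarrow> x = 1"
  using inverse_symmetric_strict_max[of "\<lambda>x. - Theta3_prod x"] Theta3_prod_gt_1 assms
  by (auto simp: Theta3_prod_def mult.commute)

section \<open>The product \<open>\<theta>\<^sub>4(e\<^sup>-\<^sup>\<pi>\<^sup>x) \<theta>\<^sub>4(e\<^sup>-\<^sup>\<pi>\<^sup>/\<^sup>x)\<close> is maximal at \<open>x = 1\<close>\<close>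

lemma exp_neg_pi_le: "exp (-pi) \<le> 1/20"
proof -
  have "exp 1 \<ge> 5837465777 / 2147483648 - inverse (2 ^ 32::real)"
    using e_approx_32 unfolding abs_le_iff by linarith
  then have "(2718/1000::real)^3 \<le> exp 1 ^ 3" by (intro power_mono) simp_all
  also have "exp 1 ^ 3 = exp (3::real)" using exp_of_nat_mult[of 3 "1::real"] by simp
  also have "exp (3::real) \<le> exp pi" using pi_gt3 by simp
  finally have "20 \<le> exp pi" by (simp add: power_divide)
  then show ?thesis by (simp add: exp_minus field_simps)
qed

lemma pi_power2_le: "pi^2 \<le> 10"
proof -
  have "pi^2 \<le> 3.1415926535899^2" using pi_approx(2) by (intro power_mono) auto
  also have "\<dots> \<le> 10" by (simp add: power2_eq_square)
  finally show ?thesis .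
qed

lemma of_nat_power2_le_four_power: "real m ^ 2 \<le> 4 ^ m"
proof -
  have "m < 2 ^ m" by simp
  then have "real m \<le> 2 ^ m" by (metis less_imp_le of_nat_le_iff of_nat_numeral of_nat_power)
  then have "real m ^ 2 \<le> (2 ^ m) ^ 2" by (intro power_mono) auto
  also have "(2 ^ m) ^ 2 = ((2::real) ^ 2) ^ m" by (simp only: power_mult[symmetric] mult.commute)
  also have "\<dots> = 4 ^ m" by simp
  finally show ?thesis .
qed

lemma geometric_tail_sums:
  fixes r :: real
  assumes "0 \<le> r" "r < 1"
  shows "(\<lambda>n. if n < k then 0 else r ^ n) sums (r^k / (1 - r))"
proof -
  have "(\<lambda>i. r^k * r^i) sums (r^k * (1 / (1 - r)))"
    using sums_mult[OF geometric_sums[of r], of "r^k"] assms by simp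
  then have "(\<lambda>i. (\<lambda>n. if n < k then 0 else r ^ n) (i + k)) sums (r^k / (1 - r))"
    by (simp add: power_add mult.commute)
  then show ?thesis by (subst (asm) sums_iff_shift) simp
qed

lemma of_nat_power2_mult_power_le:
  fixes q :: real
  assumes "0 \<le> q" "4 * q \<le> 1" "k \<le> m"
  shows "real m ^ 2 * q ^ m \<le> (4 * q) ^ k"
proof -
  have "real m ^ 2 * q ^ m \<le> 4 ^ m * q ^ m"
    using of_nat_power2_le_four_power[of m] assms by (intro mult_right_mono) auto
  also have "\<dots> = (4 * q) ^ m" by (simp add: power_mult_distrib)
  also have "\<dots> \<le> (4 * q) ^ k" using assms by (intro power_decreasing) auto
  finally show ?thesis .
qed

lemma exp_neg_pi_mult_bounds:
  assumes "x \<ge> 1"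
  shows "0 < exp (-(pi*x))" "exp (-(pi*x)) \<le> 1/20"
proof -
  have "exp (-(pi*x)) \<le> exp (-pi)" using assms by simp
  then show "exp (-(pi*x)) \<le> 1/20" using exp_neg_pi_le by linarith
qed simp

definition Theta4' :: "real \<Rightarrow> real" where
  "Theta4' = exp_series (deriv_coeffs sq_exponent theta4_coeff) sq_exponent"

definition Theta4'' :: "real \<Rightarrow> real" where
  "Theta4'' = exp_series (deriv_coeffs sq_exponent (deriv_coeffs sq_exponent theta4_coeff)) sq_exponent"

lemmas subexp_coeffs_Theta4' =
  subexp_coeffs_deriv_coeffs[OF subexp_coeffs_theta4_coeff quadratic_exponents_sq_exponent]

lemma Theta4_has_derivative: "x > 0 \<Longrightarrow> (Theta4 has_real_derivative Theta4' x) (at x)"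
  unfolding Theta4_def Theta4'_def
  by (rule exp_series_has_derivative[OF subexp_coeffs_theta4_coeff quadratic_exponents_sq_exponent])

lemma Theta4'_has_derivative: "x > 0 \<Longrightarrow> (Theta4' has_real_derivative Theta4'' x) (at x)"
  unfolding Theta4'_def Theta4''_def
  by (rule exp_series_has_derivative[OF subexp_coeffs_Theta4' quadratic_exponents_sq_exponent])

lemma Theta4''_term_le:
  fixes q :: real
  assumes q: "0 < q" "q \<le> 1/20"
  shows "pi^2 * (real (n*n) ^ 2 * q ^ (n*n)) * theta4_coeff n
    \<le> (if n = 1 then - 2 * pi^2 * q else 0) + 2 * pi^2 * (if n < 2 then 0 else (16 * q^2) ^ n)"
proof (cases "n < 2")
  case True
  then have "n = 0 \<or> n = 1" by auto
  then show ?thesis by (auto simp: theta4_coeff_def)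
next
  case False
  have "real (n*n) ^ 2 * q ^ (n*n) \<le> (4 * q) ^ (2 * n)"
    using False q by (intro of_nat_power2_mult_power_le) auto
  also have "\<dots> = (16 * q^2) ^ n" by (simp add: power_mult power_mult_distrib)
  finally have bound: "pi^2 * (real (n*n) ^ 2 * q ^ (n*n)) \<le> pi^2 * (16 * q^2) ^ n" by simp
  have "theta4_coeff n \<le> 2"
    using abs_le_D1[of "(-1::real)^n" 1] by (simp add: theta4_coeff_def power_abs)
  then have "pi^2 * (real (n*n) ^ 2 * q ^ (n*n)) * theta4_coeff n \<le> pi^2 * (real (n*n) ^ 2 * q ^ (n*n)) * 2"
    using q by (intro mult_left_mono) auto
  also have "\<dots> \<le> pi^2 * (16 * q^2) ^ n * 2" using bound by simp
  finally show ?thesis using False by (simp add: mult_ac)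
qed

text \<open>With \<open>q = e\<^sup>-\<^sup>\<pi>\<^sup>x \<le> 1/20\<close>, the term \<open>-2\<pi>\<^sup>2q\<close> of \<open>\<theta>\<^sub>4''\<close> dominates all the others.\<close>
lemma Theta4''_nonpos:
  assumes x: "x \<ge> 1"
  shows "Theta4'' x \<le> 0"
proof -
  define q where "q = exp (-(pi*x))"
  have q: "q > 0" "q \<le> 1/20" using exp_neg_pi_mult_bounds[OF x] by (auto simp: q_def)
  define r where "r = 16 * q^2"
  have "q^2 \<le> (1/20)^2" using q by (intro power_mono) auto
  then have r: "0 \<le> r" "r \<le> 1/25" by (auto simp: r_def power_divide)
  define t where "t n = deriv_coeffs sq_exponent (deriv_coeffs sq_exponent theta4_coeff) n * exp (-(sq_exponent n * x))" for n
  define a where "a n = (if n = 1 then - 2 * pi^2 * q else 0)" for n :: nat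
  define f where "f n = 2 * pi^2 * (if n < 2 then 0 else r ^ n)" for n :: nat
  have t_eq: "t n = pi^2 * (real (n*n) ^ 2 * q ^ (n*n)) * theta4_coeff n" for n
    using exp_neg_pi_power_sq[of x n]
    by (simp add: t_def q_def deriv_coeffs_def sq_exponent_def power2_eq_square nat_mult_distrib)
  have af_eq: "a n + f n
      = (if n = 1 then - 2 * pi^2 * q else 0) + 2 * pi^2 * (if n < 2 then 0 else (16 * q^2) ^ n)" for n
    by (simp add: a_def f_def r_def)
  have le: "t n \<le> a n + f n" for n
    unfolding t_eq af_eq by (rule Theta4''_term_le[OF q])
  have summable: "summable t"
    unfolding t_def using x
    by (intro summable_exp_series[OF subexp_coeffs_deriv_coeffs[OF subexp_coeffs_Theta4' quadratic_exponents_sq_exponent]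
          quadratic_exponents_sq_exponent]) auto
  have sums: "(\<lambda>n. a n + f n) sums (- 2 * pi^2 * q + 2 * pi^2 * (r^2 / (1 - r)))"
  proof (rule sums_add)
    show "a sums (- 2 * pi^2 * q)"
      using sums_single[of 1 "\<lambda>_. - 2 * pi^2 * q"] by (simp add: a_def[abs_def])
    show "f sums (2 * pi^2 * (r^2 / (1 - r)))"
      unfolding f_def using geometric_tail_sums[of r 2] r by (intro sums_mult) auto
  qed
  have "suminf t \<le> - 2 * pi^2 * q + 2 * pi^2 * (r^2 / (1 - r))"
    using suminf_le[OF le summable sums_summable[OF sums]] sums_unique[OF sums] by simp
  also have "\<dots> \<le> 0"
  proof -
    have "q^3 \<le> (1/20)^3" using q by (intro power_mono) auto
    then have "256 * q^3 \<le> 1 - r" using r by (simp add: power_divide)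
    then have "q * (256 * q^3) \<le> q * (1 - r)" using q by (intro mult_left_mono) auto
    then have "r^2 \<le> q * (1 - r)" by (simp add: r_def power_mult_distrib power2_eq_square power3_eq_cube)
    then have "r^2 / (1 - r) \<le> q" using r by (simp add: divide_le_eq)
    then have "2 * pi^2 * (r^2 / (1 - r)) \<le> 2 * pi^2 * q" by (intro mult_left_mono) auto
    then show ?thesis by simp
  qed
  finally show ?thesis by (simp add: Theta4''_def exp_series_def t_def[abs_def])
qed

lemma power2_mult_exp_neg_le:
  fixes x c :: real
  assumes x: "x \<ge> 1" and c: "c \<ge> 2"
  shows "x^2 * exp (-(c*x)) \<le> exp (-c)"
proof -
  have "x \<le> exp (x - 1)" using exp_ge_add_one_self[of "x - 1"] by simp
  then have "x^2 \<le> exp (x - 1) ^ 2" using x by (intro power_mono) auto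
  also have "\<dots> = exp (2*x - 2)" by (simp add: power2_eq_square exp_add[symmetric])
  finally have "x^2 * exp (-(c*x)) \<le> exp (2*x - 2) * exp (-(c*x))" by (intro mult_right_mono) auto
  also have "\<dots> = exp (2*x - 2 - c*x)" by (simp add: exp_add[symmetric])
  also have "\<dots> \<le> exp (-c)"
  proof -
    have "(c - 2) * (x - 1) \<ge> 0" using x c by auto
    then show ?thesis by (simp add: algebra_simps)
  qed
  finally show ?thesis .
qed

definition Theta2_core' :: "real \<Rightarrow> real" where
  "Theta2_core' = exp_series (deriv_coeffs pronic_exponent (\<lambda>_. 1)) pronic_exponent"

definition Theta2_core'' :: "real \<Rightarrow> real" where
  "Theta2_core'' = exp_series (deriv_coeffs pronic_exponent (deriv_coeffs pronic_exponent (\<lambda>_. 1))) pronic_exponent"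

lemmas subexp_coeffs_Theta2_core' =
  subexp_coeffs_deriv_coeffs[OF subexp_coeffs_const[of 1] quadratic_exponents_pronic_exponent]

lemmas subexp_coeffs_Theta2_core'' =
  subexp_coeffs_deriv_coeffs[OF subexp_coeffs_Theta2_core' quadratic_exponents_pronic_exponent]

lemma Theta2_core_has_derivative: "x > 0 \<Longrightarrow> (Theta2_core has_real_derivative Theta2_core' x) (at x)"
  unfolding Theta2_core_def Theta2_core'_def
  by (rule exp_series_has_derivative[OF subexp_coeffs_const quadratic_exponents_pronic_exponent])

lemma Theta2_core'_has_derivative: "x > 0 \<Longrightarrow> (Theta2_core' has_real_derivative Theta2_core'' x) (at x)"
  unfolding Theta2_core'_def Theta2_core''_def
  by (rule exp_series_has_derivative[OF subexp_coeffs_Theta2_core' quadratic_exponents_pronic_exponent])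

lemma Theta2_core_ge_1: "x > 0 \<Longrightarrow> Theta2_core x \<ge> 1"
  using sum_le_suminf[OF summable_exp_series[OF subexp_coeffs_const[of 1] quadratic_exponents_pronic_exponent], of x "{0}"]
  by (simp add: Theta2_core_def exp_series_def pronic_exponent_def)

lemma Theta2_core''_nonneg: "x > 0 \<Longrightarrow> Theta2_core'' x \<ge> 0"
  unfolding Theta2_core''_def exp_series_def
  by (rule suminf_nonneg[OF summable_exp_series[OF subexp_coeffs_Theta2_core'' quadratic_exponents_pronic_exponent]])
     (simp_all add: deriv_coeffs_def)

lemma Theta2_core''_term_le:
  assumes x: "x \<ge> 1"
  shows "x^2 * (pronic_exponent n ^ 2 * exp (-(pronic_exponent n * x)))
    \<le> pi^2 * (if n < 1 then 0 else (16 * exp (-pi)^2) ^ n)"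
proof (cases "n < 1")
  case True
  then show ?thesis by (simp add: pronic_exponent_def)
next
  case False
  define m where "m = n * (n + 1)"
  have exponent: "pronic_exponent n = pi * real m" by (simp add: pronic_exponent_def m_def algebra_simps)
  have "2 * n \<le> m" using False by (simp add: m_def)
  then have "2 * 1 \<le> pi * real m" using pi_ge_two False by (intro mult_mono) auto
  then have "pronic_exponent n \<ge> 2" by (simp add: exponent)
  have "x^2 * (pronic_exponent n ^ 2 * exp (-(pronic_exponent n * x)))
      = pronic_exponent n ^ 2 * (x^2 * exp (-(pronic_exponent n * x)))"
    by (simp add: mult_ac)
  also have "\<dots> \<le> pronic_exponent n ^ 2 * exp (-(pronic_exponent n))"
    using power2_mult_exp_neg_le[OF x \<open>pronic_exponent n \<ge> 2\<close>] by (intro mult_left_mono) (auto simp: mult_ac)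
  also have "\<dots> = pi^2 * (real m ^ 2 * exp (-pi) ^ m)"
    by (simp add: exponent power_mult_distrib exp_of_nat_mult[symmetric] mult_ac)
  also have "\<dots> \<le> pi^2 * (4 * exp (-pi)) ^ (2 * n)"
    using \<open>2 * n \<le> m\<close> exp_neg_pi_le by (intro mult_left_mono of_nat_power2_mult_power_le) auto
  also have "\<dots> = pi^2 * (16 * exp (-pi)^2) ^ n" by (simp add: power_mult power_mult_distrib)
  finally show ?thesis using False by simp
qed

lemma Theta2_core''_bound:
  assumes x: "x \<ge> 1"
  shows "x^2 * Theta2_core'' x \<le> 5/12"
proof -
  define r where "r = 16 * exp (-pi)^2"
  have "exp (-pi)^2 \<le> (1/20)^2" using exp_neg_pi_le by (intro power_mono) auto
  then have r: "0 \<le> r" "r \<le> 1/25" by (auto simp: r_def power_divide)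
  define t where "t n = x^2 * (deriv_coeffs pronic_exponent (deriv_coeffs pronic_exponent (\<lambda>_. 1)) n
      * exp (-(pronic_exponent n * x)))" for n
  define f where "f n = pi^2 * (if n < 1 then 0 else r ^ n)" for n :: nat
  have "t n = x^2 * (pronic_exponent n ^ 2 * exp (-(pronic_exponent n * x)))" for n
    by (simp add: t_def deriv_coeffs_def power2_eq_square)
  moreover have "f n = pi^2 * (if n < 1 then 0 else (16 * exp (-pi)^2) ^ n)" for n
    by (simp add: f_def r_def)
  ultimately have le: "t n \<le> f n" for n
    using Theta2_core''_term_le[OF x, of n] by (simp only:)
  have summable: "summable t"
    unfolding t_def using x
    by (intro summable_mult summable_exp_series[OF subexp_coeffs_Theta2_core'' quadratic_exponents_pronic_exponent]) auto
  have sums: "f sums (pi^2 * (r / (1 - r)))"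
    unfolding f_def using geometric_tail_sums[of r 1] r by (intro sums_mult) auto
  have "x^2 * Theta2_core'' x = suminf t"
    unfolding t_def Theta2_core''_def exp_series_def using x
    by (intro suminf_mult[symmetric] summable_exp_series[OF subexp_coeffs_Theta2_core'' quadratic_exponents_pronic_exponent]) auto
  also have "\<dots> \<le> pi^2 * (r / (1 - r))"
    using suminf_le[OF le summable sums_summable[OF sums]] sums_unique[OF sums] by simp
  also have "\<dots> \<le> 10 * (1/24)"
    using r pi_power2_le by (intro mult_mono) (auto simp: divide_le_eq)
  finally show ?thesis by simp
qed

lemma Theta4_pos:
  assumes "x > 0"
  shows "Theta4 x > 0"
proof -
  have "Theta4 x = 2 * sqrt (1/x) * exp (-(pi*(1/x)/4)) * Theta2_core (1/x)"
    using Theta4_inverse[of "1/x"] assms by simp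
  then show ?thesis using Theta2_core_ge_1[of "1/x"] assms by (simp add: zero_less_mult_iff)
qed

definition Theta4_prod :: "real \<Rightarrow> real" where
  "Theta4_prod x = Theta4 x * Theta4 (1/x)"

definition ln_Theta4_prod :: "real \<Rightarrow> real" where
  "ln_Theta4_prod x = ln 2 + ln x / 2 - pi*x/4 + ln (Theta4 x) + ln (Theta2_core x)"

definition ln_Theta4_prod' :: "real \<Rightarrow> real" where
  "ln_Theta4_prod' x = 1/(2*x) - pi/4 + Theta4' x / Theta4 x + Theta2_core' x / Theta2_core x"

definition ln_Theta4_prod'' :: "real \<Rightarrow> real" where
  "ln_Theta4_prod'' x = -1/(2*x^2) + (Theta4'' x * Theta4 x - Theta4' x ^ 2) / Theta4 x ^ 2
     + (Theta2_core'' x * Theta2_core x - Theta2_core' x ^ 2) / Theta2_core x ^ 2"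

lemma ln_Theta4_prod_eq:
  assumes x: "x > 0"
  shows "ln_Theta4_prod x = ln (Theta4_prod x)"
proof -
  have "Theta4_prod x = 2 * sqrt x * exp (-(pi*x/4)) * Theta4 x * Theta2_core x"
    using Theta4_inverse[OF x] by (simp add: Theta4_prod_def mult_ac)
  moreover have "Theta4 x > 0" "Theta2_core x > 0" using Theta4_pos[OF x] Theta2_core_ge_1[OF x] by auto
  ultimately show ?thesis using x by (simp add: ln_Theta4_prod_def ln_mult ln_sqrt)
qed

lemma ln_Theta4_prod_has_derivative:
  assumes x: "x > 0"
  shows "(ln_Theta4_prod has_real_derivative ln_Theta4_prod' x) (at x)"
proof -
  have "Theta4 x > 0" "Theta2_core x > 0" using Theta4_pos[OF x] Theta2_core_ge_1[OF x] by auto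
  then have "(ln_Theta4_prod has_real_derivative
      (inverse x / 2 - pi/4 + Theta4' x / Theta4 x + Theta2_core' x / Theta2_core x)) (at x)"
    unfolding ln_Theta4_prod_def[abs_def] using x
    by (auto intro!: derivative_eq_intros Theta4_has_derivative Theta2_core_has_derivative simp: field_simps)
  then show ?thesis by (simp add: ln_Theta4_prod'_def field_simps)
qed

lemma ln_Theta4_prod'_has_derivative:
  assumes x: "x > 0"
  shows "(ln_Theta4_prod' has_real_derivative ln_Theta4_prod'' x) (at x)"
proof -
  have "Theta4 x > 0" "Theta2_core x > 0" using Theta4_pos[OF x] Theta2_core_ge_1[OF x] by auto
  then have "(ln_Theta4_prod' has_real_derivative
      (- (2 / (2*x)^2) + (Theta4'' x * Theta4 x - Theta4' x * Theta4' x) / (Theta4 x * Theta4 x)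
       + (Theta2_core'' x * Theta2_core x - Theta2_core' x * Theta2_core' x) / (Theta2_core x * Theta2_core x))) (at x)"
    unfolding ln_Theta4_prod'_def[abs_def] using x
    by (auto intro!: derivative_eq_intros Theta4_has_derivative Theta2_core_has_derivative
        Theta4'_has_derivative Theta2_core'_has_derivative simp: field_simps power2_eq_square)
  moreover have "- (2 / (2*x)^2) = -1/(2*x^2)" using x by (simp add: field_simps power2_eq_square)
  ultimately show ?thesis by (simp add: ln_Theta4_prod''_def power2_eq_square)
qed

text \<open>\<open>\<theta>\<^sub>4\<close> is log-concave by \<open>Theta4''_nonpos\<close>, and \<open>Theta2_core'' / Theta2_core\<close> is too small to
  compensate \<open>-1/(2x\<^sup>2)\<close>.\<close>
lemma ln_Theta4_prod''_neg:
  assumes x: "x \<ge> 1"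
  shows "ln_Theta4_prod'' x < 0"
proof -
  have x0: "x > 0" using x by simp
  have pos: "Theta4 x > 0" "Theta2_core x \<ge> 1" using Theta4_pos[OF x0] Theta2_core_ge_1[OF x0] by auto
  have "Theta4'' x * Theta4 x - Theta4' x ^ 2 \<le> 0"
    using mult_nonpos_nonneg[OF Theta4''_nonpos[OF x], of "Theta4 x"] pos
    by (smt (verit) zero_le_power2)
  then have Theta4_part: "(Theta4'' x * Theta4 x - Theta4' x ^ 2) / Theta4 x ^ 2 \<le> 0"
    by (intro divide_nonpos_nonneg) auto
  have "(Theta2_core'' x * Theta2_core x - Theta2_core' x ^ 2) / Theta2_core x ^ 2
      \<le> (Theta2_core'' x * Theta2_core x) / Theta2_core x ^ 2"
    using pos by (intro divide_right_mono) auto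
  also have "\<dots> = Theta2_core'' x / Theta2_core x" using pos by (simp add: power2_eq_square)
  also have "\<dots> \<le> Theta2_core'' x"
    using pos Theta2_core''_nonneg[OF x0] by (simp add: divide_le_eq mult_le_cancel_left1)
  also have "\<dots> \<le> 5/12 / x^2" using Theta2_core''_bound[OF x] x0 by (simp add: field_simps)
  also have "\<dots> < 1/(2*x^2)" using x0 by (simp add: field_simps)
  finally show ?thesis unfolding ln_Theta4_prod''_def using Theta4_part by linarith
qed

lemma Theta4_prod_lt_1:
  assumes x: "x > 1"
  shows "Theta4_prod x < Theta4_prod 1"
proof -
  have "ln_Theta4_prod' 1 = 0"
    by (intro deriv_at_1_eq_0_if_inverse_symmetric[OF ln_Theta4_prod_has_derivative])
       (simp_all add: ln_Theta4_prod_eq Theta4_prod_def mult.commute)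
  moreover have "ln_Theta4_prod' y < ln_Theta4_prod' 1" if "y > 1" for y
    using ln_Theta4_prod'_has_derivative ln_Theta4_prod''_neg that
    by (intro DERIV_neg_interior_imp_less[where f'=ln_Theta4_prod'', OF that]) auto
  ultimately have "ln_Theta4_prod x < ln_Theta4_prod 1"
    using ln_Theta4_prod_has_derivative x
    by (intro DERIV_neg_interior_imp_less[where f'=ln_Theta4_prod', OF x]) auto
  moreover have "Theta4_prod y > 0" if "y > 0" for y
    using Theta4_pos that by (simp add: Theta4_prod_def)
  ultimately show ?thesis using x by (simp add: ln_Theta4_prod_eq)
qed

lemma Theta4_prod_strict_max:
  assumes "x > 0"
  shows "Theta4_prod x \<le> Theta4_prod 1" and "Theta4_prod x = Theta4_prod 1 \<longleftrightarrow> x = 1"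
  using inverse_symmetric_strict_max[of Theta4_prod] Theta4_prod_lt_1 assms
  by (auto simp: Theta4_prod_def mult.commute)

section \<open>The hypergeometric function \<open>\<^sub>2F\<^sub>1(1/2,1/2;1;t)\<close>\<close>

lemma subexp_coeffs_mult_of_nat: "subexp_coeffs c \<Longrightarrow> subexp_coeffs (\<lambda>n. real n * c n)"
proof (rule subexp_coeffs_mult[of _ _ 1])
  show "\<bar>real n\<bar> \<le> 1 * (real n + 1)^2" for n
  proof -
    have "real n ^ 2 \<le> (real n + 1)^2" by (intro power_mono) auto
    then show ?thesis using of_nat_le_power2[of n] by linarith
  qed
qed

lemma subexp_coeffs_mult_of_nat_pred: "subexp_coeffs c \<Longrightarrow> subexp_coeffs (\<lambda>n. real n * (real n - 1) * c n)"
proof (rule subexp_coeffs_mult[of _ _ 1])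
  show "\<bar>real n * (real n - 1)\<bar> \<le> 1 * (real n + 1)^2" for n
    by (cases n) (simp_all add: power2_eq_square algebra_simps)
qed

lemma subexp_coeffs_diffs: "subexp_coeffs c \<Longrightarrow> subexp_coeffs (diffs c)"
  unfolding diffs_def
proof (rule subexp_coeffs_mult[OF subexp_coeffs_shift, of _ _ 1])
  show "\<bar>real (Suc n)\<bar> \<le> 1 * (real n + 1)^2" for n
    using self_le_power[of "real n + 1" 2] by simp
qed

lemma powser_mult_x_eq_diffs:
  assumes c: "subexp_coeffs c" and x: "\<bar>x\<bar> < 1"
  shows "x * (\<Sum>n. diffs c n * x^n) = (\<Sum>n. (real n * c n) * x^n)"
proof -
  from subexp_coeffs_mult_of_nat[OF c] have "(\<Sum>n. (real n * c n) * x^n) = 0 * c 0 + (\<Sum>n. (real (Suc n) * c (Suc n)) * x^n) * x"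
    using powser_split_head(1)[OF subexp_coeffs_summable_powser[OF _ x]] by simp
  then show ?thesis by (simp add: diffs_def mult.commute)
qed

lemma powser_mult_x2_eq_diffs_diffs:
  assumes c: "subexp_coeffs c" and x: "\<bar>x\<bar> < 1"
  shows "x^2 * (\<Sum>n. diffs (diffs c) n * x^n) = (\<Sum>n. (real n * (real n - 1) * c n) * x^n)"
proof -
  define h where "h n = real n * (real n - 1) * c n" for n
  have summable: "summable (\<lambda>n. h n * x^n)"
    unfolding h_def by (rule subexp_coeffs_summable_powser[OF subexp_coeffs_mult_of_nat_pred[OF c] x])
  have "(\<Sum>n. h n * x^n) = h 0 + (\<Sum>n. h (Suc n) * x^n) * x"
    by (rule powser_split_head(1)[OF summable])
  also have "(\<Sum>n. h (Suc n) * x^n) = h 1 + (\<Sum>n. h (Suc (Suc n)) * x^n) * x"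
    using powser_split_head(1)[OF powser_split_head(3)[OF summable]] by simp
  also have "(\<lambda>n. h (Suc (Suc n)) * x^n) = (\<lambda>n. diffs (diffs c) n * x^n)"
    by (simp add: h_def diffs_def algebra_simps)
  finally show ?thesis by (simp add: h_def power2_eq_square mult_ac)
qed

definition hypF_coeff :: "nat \<Rightarrow> real" where
  "hypF_coeff n = (pochhammer (1/2) n / fact n)^2"

definition hypF :: "real \<Rightarrow> real" where
  "hypF t = (\<Sum>n. hypF_coeff n * t^n)"

definition hypF' :: "real \<Rightarrow> real" where
  "hypF' t = (\<Sum>n. diffs hypF_coeff n * t^n)"

definition hypF'' :: "real \<Rightarrow> real" where
  "hypF'' t = (\<Sum>n. diffs (diffs hypF_coeff) n * t^n)"

lemma hyp2F1_half_half_one: "hyp2F1 (1/2) (1/2) 1 t = hypF t"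
  unfolding hyp2F1_def hypF_def
  by (intro suminf_cong) (simp add: hypF_coeff_def pochhammer_fact[symmetric] power2_eq_square field_simps)

lemma hypF_coeff_Suc: "hypF_coeff (Suc n) = hypF_coeff n * ((real n + 1/2) / (real n + 1))^2"
  by (simp add: hypF_coeff_def pochhammer_Suc power2_eq_square field_simps)

lemma hypF_coeff_pos: "hypF_coeff n > 0"
  using pochhammer_pos[of "1/2::real" n] by (simp add: hypF_coeff_def)

lemma hypF_coeff_le_1: "hypF_coeff n \<le> 1"
proof (induction n)
  case 0
  then show ?case by (simp add: hypF_coeff_def)
next
  case (Suc n)
  have "((real n + 1/2) / (real n + 1))^2 \<le> 1" by (simp add: power_le_one divide_le_eq)
  then have "hypF_coeff n * ((real n + 1/2) / (real n + 1))^2 \<le> hypF_coeff n * 1"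
    using hypF_coeff_pos[of n] by (intro mult_left_mono) auto
  then show ?case using Suc.IH by (simp add: hypF_coeff_Suc)
qed

lemma subexp_coeffs_hypF_coeff: "subexp_coeffs hypF_coeff"
  by (rule subexp_coeffs_bounded[of _ 1]) (use hypF_coeff_le_1 hypF_coeff_pos in \<open>auto simp: abs_of_pos\<close>)

lemmas subexp_coeffs_hypF' = subexp_coeffs_diffs[OF subexp_coeffs_hypF_coeff]
lemmas subexp_coeffs_hypF'' = subexp_coeffs_diffs[OF subexp_coeffs_hypF']

lemma hypF_has_derivative: "\<bar>t\<bar> < 1 \<Longrightarrow> (hypF has_real_derivative hypF' t) (at t)"
  unfolding hypF_def[abs_def] hypF'_def
  by (rule termdiffs_strong'[of 1]) (auto intro: subexp_coeffs_summable_powser[OF subexp_coeffs_hypF_coeff])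

lemma hypF'_has_derivative: "\<bar>t\<bar> < 1 \<Longrightarrow> (hypF' has_real_derivative hypF'' t) (at t)"
  unfolding hypF'_def[abs_def] hypF''_def
  by (rule termdiffs_strong'[of 1]) (auto intro: subexp_coeffs_summable_powser[OF subexp_coeffs_hypF'])

lemma hypF_ge_1: "0 \<le> t \<Longrightarrow> t < 1 \<Longrightarrow> hypF t \<ge> 1"
  using sum_le_suminf[OF subexp_coeffs_summable_powser[OF subexp_coeffs_hypF_coeff], of t "{0}"]
    hypF_coeff_pos by (simp add: hypF_def hypF_coeff_def less_imp_le)

lemma hypF_pos: "0 \<le> t \<Longrightarrow> t < 1 \<Longrightarrow> hypF t > 0"
  using hypF_ge_1 by fastforce

lemma hypF_0: "hypF 0 = 1"
  by (simp add: hypF_def hypF_coeff_def)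

lemma hypF'_0: "hypF' 0 = 1/4"
  unfolding hypF'_def powser_zero by (simp add: diffs_def hypF_coeff_def power2_eq_square)

lemma hypF_ODE:
  assumes t: "\<bar>t\<bar> < 1"
  shows "t * (1 - t) * hypF'' t = hypF t / 4 - (1 - 2*t) * hypF' t"
proof -
  let ?a = hypF_coeff
  have summable: "summable (\<lambda>n. c n * t^n)" if "subexp_coeffs c" for c
    by (rule subexp_coeffs_summable_powser[OF that t])
  have "(\<lambda>n. (real n * diffs ?a n) * t^n - (real n * (real n - 1) * ?a n) * t^n
            + diffs ?a n * t^n - 2 * ((real n * ?a n) * t^n) - (?a n * t^n) / 4)
        sums (t * hypF'' t - t^2 * hypF'' t + hypF' t - 2 * (t * hypF' t) - hypF t / 4)"
    unfolding hypF_def hypF'_def hypF''_def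
      powser_mult_x_eq_diffs[OF subexp_coeffs_hypF' t] powser_mult_x2_eq_diffs_diffs[OF subexp_coeffs_hypF_coeff t]
      powser_mult_x_eq_diffs[OF subexp_coeffs_hypF_coeff t]
    by (intro sums_diff sums_add sums_mult sums_divide summable_sums summable subexp_coeffs_hypF_coeff
        subexp_coeffs_hypF' subexp_coeffs_mult_of_nat subexp_coeffs_mult_of_nat_pred)
  moreover have "(\<lambda>n. (real n * diffs ?a n) * t^n - (real n * (real n - 1) * ?a n) * t^n
            + diffs ?a n * t^n - 2 * ((real n * ?a n) * t^n) - (?a n * t^n) / 4) = (\<lambda>n. 0)"
  proof
    fix n
    have "(real n + 1)^2 * ?a (Suc n) = (real n + 1/2)^2 * ?a n"
      unfolding hypF_coeff_Suc power_divide by (simp add: field_simps)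
    then have "(real n * diffs ?a n) - (real n * (real n - 1) * ?a n) + diffs ?a n - 2 * (real n * ?a n) - ?a n / 4 = 0"
      by (simp add: diffs_def power2_eq_square algebra_simps)
    moreover have "(real n * diffs ?a n) * t^n - (real n * (real n - 1) * ?a n) * t^n
            + diffs ?a n * t^n - 2 * ((real n * ?a n) * t^n) - (?a n * t^n) / 4
        = ((real n * diffs ?a n) - (real n * (real n - 1) * ?a n) + diffs ?a n - 2 * (real n * ?a n) - ?a n / 4) * t^n"
      by (simp add: algebra_simps)
    ultimately show "(real n * diffs ?a n) * t^n - (real n * (real n - 1) * ?a n) * t^n
            + diffs ?a n * t^n - 2 * ((real n * ?a n) * t^n) - (?a n * t^n) / 4 = 0"
      by simp
  qed
  ultimately have "t * hypF'' t - t^2 * hypF'' t + hypF' t - 2 * (t * hypF' t) - hypF t / 4 = 0"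
    using sums_unique2 sums_zero by metis
  then show ?thesis by (simp add: power2_eq_square algebra_simps)
qed

lemma hypF_aux_coeff_pos:
  "2 * diffs hypF_coeff n - diffs (diffs hypF_coeff) n + 2 * (real n * diffs hypF_coeff n) > 0"
proof -
  define a1 where "a1 = hypF_coeff (Suc n)"
  define a2 where "a2 = hypF_coeff (Suc (Suc n))"
  have "(real (Suc n) + 1)^2 * a2 = (real (Suc n) + 1/2)^2 * a1"
    unfolding a1_def a2_def hypF_coeff_Suc[of "Suc n"] power_divide by (simp add: field_simps)
  then have rec: "4*(real n + 2)^2 * a2 = (2*real n + 3)^2 * a1"
    by (simp add: power2_eq_square algebra_simps)
  have "4 * (2 * diffs hypF_coeff n - diffs (diffs hypF_coeff) n + 2 * (real n * diffs hypF_coeff n)) * (real n + 2)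
      = 8*(real n+1)*(real n+2)*a1 - (real n+1)*(4*(real n+2)^2*a2) + 8*real n*(real n+1)*(real n+2)*a1"
    unfolding diffs_def a1_def a2_def by (simp add: power2_eq_square algebra_simps)
  also have "\<dots> = (real n + 1) * a1 * (4 * (real n)^2 + 12 * real n + 7)"
    unfolding rec by (simp add: power2_eq_square algebra_simps)
  also have "\<dots> > 0"
  proof -
    have "0 \<le> 4 * (real n)^2 + 12 * real n" by simp
    then have "4 * (real n)^2 + 12 * real n + 7 > 0" by linarith
    then show ?thesis by (intro mult_pos_pos) (simp_all add: a1_def hypF_coeff_pos)
  qed
  finally show ?thesis by (simp add: zero_less_mult_iff)
qed

lemma hypF_aux_pos:
  assumes t: "0 \<le> t" "t < 1"
  shows "2 * hypF' t - (1 - 2 * t) * hypF'' t > 0"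
proof -
  have t': "\<bar>t\<bar> < 1" using t by simp
  let ?c = "\<lambda>n. 2 * diffs hypF_coeff n - diffs (diffs hypF_coeff) n + 2 * (real n * diffs hypF_coeff n)"
  have "(\<lambda>n. 2 * (diffs hypF_coeff n * t^n) - diffs (diffs hypF_coeff) n * t^n
          + 2 * ((real n * diffs hypF_coeff n) * t^n))
        sums (2 * hypF' t - hypF'' t + 2 * (t * hypF'' t))"
    unfolding hypF'_def hypF''_def powser_mult_x_eq_diffs[OF subexp_coeffs_hypF' t']
    by (intro sums_add sums_diff sums_mult summable_sums subexp_coeffs_summable_powser[OF _ t']
        subexp_coeffs_hypF' subexp_coeffs_hypF'' subexp_coeffs_mult_of_nat)
  then have sums: "(\<lambda>n. ?c n * t^n) sums (2 * hypF' t - hypF'' t + 2 * (t * hypF'' t))"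
    by (simp add: algebra_simps)
  have "0 < (\<Sum>n. ?c n * t^n)"
  proof (rule suminf_pos2[OF sums_summable[OF sums], of 0])
    show "0 \<le> ?c n * t^n" for n using t less_imp_le[OF hypF_aux_coeff_pos[of n]] by simp
    show "0 < ?c 0 * t^0" using hypF_aux_coeff_pos[of 0] by simp
  qed
  then show ?thesis using sums by (simp add: sums_iff algebra_simps)
qed

definition phiA :: "real \<Rightarrow> real" where
  "phiA t = ln t / 4 + ln (1 - t) / 4 + ln (hypF t)"

definition phiA' :: "real \<Rightarrow> real" where
  "phiA' t = 1/(4*t) - 1/(4*(1-t)) + hypF' t / hypF t"

definition phiA'' :: "real \<Rightarrow> real" where
  "phiA'' t = -1/(4*t^2) - 1/(4*(1-t)^2) + (hypF'' t * hypF t - hypF' t ^ 2) / hypF t ^ 2"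

lemma phiA_has_derivative:
  assumes t: "0 < t" "t < 1"
  shows "(phiA has_real_derivative phiA' t) (at t)"
proof -
  have "(phiA has_real_derivative (inverse t / 4 + (- inverse (1 - t)) / 4 + hypF' t / hypF t)) (at t)"
    unfolding phiA_def[abs_def] using t hypF_pos[of t]
    by (auto intro!: derivative_eq_intros hypF_has_derivative simp: field_simps)
  then show ?thesis by (simp add: phiA'_def field_simps)
qed

lemma phiA'_has_derivative:
  assumes t: "0 < t" "t < 1"
  shows "(phiA' has_real_derivative phiA'' t) (at t)"
proof -
  have "((\<lambda>t. 1/(4*t)) has_real_derivative -1/(4*t^2)) (at t)"
    using t by (auto intro!: derivative_eq_intros simp: power2_eq_square field_simps)
  moreover have "((\<lambda>t. - (1/(4*(1-t)))) has_real_derivative -1/(4*(1-t)^2)) (at t)"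
  proof -
    have "((\<lambda>t. - (1/(4*(1-t)))) has_real_derivative - (- (4 * (-1)) / (4*(1-t) * (4*(1-t))))) (at t)"
      using t by (auto intro!: derivative_eq_intros)
    moreover have "- (- (4 * (-1)) / (4*(1-t) * (4*(1-t)))) = -1/(4*(1-t)^2)"
    proof -
      define d where "d = (1-t)^2"
      have "d \<noteq> 0" using t by (simp add: d_def)
      moreover have "4*(1-t) * (4*(1-t)) = 16 * d" by (simp add: d_def power2_eq_square algebra_simps)
      ultimately show ?thesis by (simp add: d_def field_simps)
    qed
    ultimately show ?thesis by simp
  qed
  moreover have "((\<lambda>t. hypF' t / hypF t) has_real_derivative
      (hypF'' t * hypF t - hypF' t * hypF' t) / (hypF t * hypF t)) (at t)"
    using t hypF_pos[of t] by (auto intro!: derivative_eq_intros hypF_has_derivative hypF'_has_derivative)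
  ultimately have "((\<lambda>t. 1/(4*t) + - (1/(4*(1-t))) + hypF' t / hypF t) has_real_derivative
      (-1/(4*t^2) + -1/(4*(1-t)^2) + (hypF'' t * hypF t - hypF' t * hypF' t) / (hypF t * hypF t))) (at t)"
    by (intro DERIV_add)
  then show ?thesis by (simp add: phiA'_def[abs_def] phiA''_def power2_eq_square)
qed

text \<open>By the differential equation, \<open>4 (t(1-t) F(t))\<^sup>2 phiA'' t\<close> equals
  \<open>-((2t(1-t)F' + (1-2t)F)\<^sup>2 + t(1-t)F\<^sup>2)\<close>.\<close>
lemma phiA''_neg:
  assumes t: "0 < t" "t < 1"
  shows "phiA'' t < 0"
proof -
  define p where "p = t * (1 - t)"
  have p: "p > 0" using t by (simp add: p_def)
  have F: "hypF t > 0" using hypF_pos t by simp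
  have ode: "p * hypF'' t = hypF t / 4 - (1 - 2*t) * hypF' t"
    using hypF_ODE[of t] t by (simp add: p_def)
  have pp: "p^2 = t^2 * (1-t)^2" by (simp add: p_def power_mult_distrib)
  have "4*p^2*hypF t^2*(1/(4*t^2)) = (1-t)^2 * hypF t^2"
    unfolding pp using t by (simp add: field_simps)
  moreover have "4*p^2*hypF t^2*(1/(4*(1-t)^2)) = t^2 * hypF t^2"
  proof -
    define d where "d = (1-t)^2"
    have "d \<noteq> 0" using t by (simp add: d_def)
    then have "4*(t^2*d)*hypF t^2*(1/(4*d)) = t^2 * hypF t^2" by (simp add: field_simps)
    then show ?thesis by (simp add: pp d_def)
  qed
  moreover have "4*p^2*hypF t^2*((hypF'' t * hypF t - hypF' t ^ 2) / hypF t ^ 2)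
      = 4*p*hypF t*(p * hypF'' t) - 4*p^2*hypF' t^2"
    using F by (simp add: field_simps power2_eq_square)
  ultimately have "4*p^2*hypF t^2 * phiA'' t
      = - ((1-t)^2 * hypF t^2) - t^2 * hypF t^2 + (4*p*hypF t*(p * hypF'' t) - 4*p^2*hypF' t^2)"
    unfolding phiA''_def by (simp add: algebra_simps)
  also have "\<dots> = -((2*p*hypF' t + (1 - 2*t) * hypF t)^2 + p * hypF t ^ 2)"
    unfolding ode by (simp add: p_def power2_eq_square algebra_simps)
  also have "\<dots> < 0" using p F by (smt (verit) mult_pos_pos zero_le_power2 zero_less_power)
  finally show ?thesis using p F by (simp add: mult_less_0_iff)
qed

definition PhiA :: "real \<Rightarrow> real" where
  "PhiA t = phiA t + phiA (1 - t)"

lemma PhiA_strict_max: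
  assumes "0 < t" "t < 1" "t \<noteq> 1/2"
  shows "PhiA t < PhiA (1/2)"
proof (rule reflect_symmetric_strict_max[OF _ _ assms])
  show "PhiA (1 - t) = PhiA t" for t by (simp add: PhiA_def add.commute)
  fix t :: real assume t: "0 < t" "t < 1/2"
  have "phiA' u < phiA' s" if "0 < s" "s < u" "u < 1" for s u
    using that phiA'_has_derivative phiA''_neg
    by (intro DERIV_neg_interior_imp_less[where f'=phiA'', OF \<open>s < u\<close>]) auto
  moreover have "(PhiA has_real_derivative phiA' s - phiA' (1 - s)) (at s)" if "0 < s" "s < 1" for s
  proof -
    have "((\<lambda>s. phiA (1 - s)) has_real_derivative phiA' (1 - s) * (- 1)) (at s)"
      using that by (intro DERIV_chain2[of phiA] phiA_has_derivative) (auto intro!: derivative_eq_intros)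
    from DERIV_add[OF phiA_has_derivative[OF that] this] show ?thesis
      unfolding PhiA_def[abs_def] by simp
  qed
  ultimately show "PhiA t < PhiA (1/2)"
    using t by (intro DERIV_pos_interior_imp_less[where f'="\<lambda>s. phiA' s - phiA' (1 - s)", OF t(2)]) auto
qed

text \<open>\<open>t(1-t)(F F'' - F'\<^sup>2) = hypF_q t\<close> by the differential equation, and \<open>hypF_q\<close> vanishes at
  \<open>0\<close> with derivative \<open>F (2F' - (1-2t)F'') > 0\<close>: so \<open>F'/F\<close> is increasing.\<close>
definition hypF_q :: "real \<Rightarrow> real" where
  "hypF_q t = hypF t ^ 2 / 4 - (1 - 2*t) * hypF t * hypF' t - t * (1 - t) * hypF' t ^ 2"

lemma hypF_q_has_derivative:
  assumes t: "0 \<le> t" "t < 1"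
  shows "(hypF_q has_real_derivative hypF t * (2 * hypF' t - (1 - 2*t) * hypF'' t)) (at t)"
proof -
  have t': "\<bar>t\<bar> < 1" using t by simp
  have "(hypF_q has_real_derivative (2 * hypF t * hypF' t / 4
          - ((-2) * hypF t * hypF' t + (1 - 2*t) * (hypF' t * hypF' t + hypF t * hypF'' t))
          - ((1 - 2*t) * hypF' t ^ 2 + t * (1 - t) * (2 * hypF' t * hypF'' t)))) (at t)"
    unfolding hypF_q_def[abs_def] using t'
    by (auto intro!: derivative_eq_intros hypF_has_derivative hypF'_has_derivative
        simp: power2_eq_square algebra_simps)
  moreover have "t * (1 - t) * (2 * hypF' t * hypF'' t) = 2 * hypF' t * (hypF t / 4 - (1 - 2*t) * hypF' t)"
    using hypF_ODE[OF t'] by (metis mult.commute mult.left_commute)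
  ultimately show ?thesis by (simp add: power2_eq_square algebra_simps)
qed

lemma hypF_q_pos:
  assumes t: "0 < t" "t < 1"
  shows "hypF_q t > 0"
proof -
  have "hypF_q 0 < hypF_q t"
    using t hypF_q_has_derivative hypF_pos hypF_aux_pos
    by (intro DERIV_pos_interior_imp_less[where f'="\<lambda>t. hypF t * (2 * hypF' t - (1 - 2*t) * hypF'' t)", OF t(1)])
       auto
  then show ?thesis by (simp add: hypF_q_def hypF_0 hypF'_0)
qed

lemma hypF_log_deriv_strict_mono:
  assumes "0 < s" "s < u" "u < 1"
  shows "hypF' s / hypF s < hypF' u / hypF u"
proof (rule DERIV_pos_interior_imp_less[OF \<open>s < u\<close>])
  fix t assume "s \<le> t" "t \<le> u"
  then have t: "0 < t" "t < 1" using assms by auto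
  then show "((\<lambda>t. hypF' t / hypF t) has_real_derivative
      (hypF'' t * hypF t - hypF' t * hypF' t) / (hypF t * hypF t)) (at t)"
    using hypF_pos[of t] by (auto intro!: derivative_eq_intros hypF_has_derivative hypF'_has_derivative)
next
  fix t assume "s < t" "t < u"
  then have t: "0 < t" "t < 1" using assms by auto
  have ode: "t * (1 - t) * hypF'' t = hypF t / 4 - (1 - 2*t) * hypF' t"
    using hypF_ODE[of t] t by simp
  have "t * (1 - t) * (hypF'' t * hypF t - hypF' t * hypF' t)
      = hypF t * (t * (1 - t) * hypF'' t) - t * (1 - t) * hypF' t * hypF' t"
    by (simp add: algebra_simps)
  also have "\<dots> = hypF_q t" unfolding ode hypF_q_def by (simp add: power2_eq_square algebra_simps)
  finally have "t * (1 - t) * (hypF'' t * hypF t - hypF' t * hypF' t) = hypF_q t" .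
  then have "0 < t * (1 - t) * (hypF'' t * hypF t - hypF' t * hypF' t)"
    using hypF_q_pos[OF t] by simp
  moreover have "t * (1 - t) > 0" using t by simp
  ultimately have "hypF'' t * hypF t - hypF' t * hypF' t > 0"
    by (rule zero_less_mult_pos)
  then show "(hypF'' t * hypF t - hypF' t * hypF' t) / (hypF t * hypF t) > 0"
    using hypF_pos[of t] t by simp
qed

definition PhiB :: "real \<Rightarrow> real" where
  "PhiB t = ln (hypF t) + ln (hypF (1 - t))"

lemma PhiB_strict_min:
  assumes "0 < t" "t < 1" "t \<noteq> 1/2"
  shows "PhiB (1/2) < PhiB t"
proof -
  have "(\<lambda>t. - PhiB t) t < (\<lambda>t. - PhiB t) (1/2)"
  proof (rule reflect_symmetric_strict_max[OF _ _ assms])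
    show "- PhiB (1 - t) = - PhiB t" for t by (simp add: PhiB_def add.commute)
    fix t :: real assume t: "0 < t" "t < 1/2"
    have "((\<lambda>t. - PhiB t) has_real_derivative hypF' (1 - s) / hypF (1 - s) - hypF' s / hypF s) (at s)"
      if "0 < s" "s < 1" for s
    proof -
      have "((\<lambda>s. hypF (1 - s)) has_real_derivative hypF' (1 - s) * (- 1)) (at s)"
        using that by (intro DERIV_chain2[of hypF] hypF_has_derivative) (auto intro!: derivative_eq_intros)
      then show ?thesis
        unfolding PhiB_def[abs_def] using that hypF_pos[of s] hypF_pos[of "1 - s"]
        by (auto intro!: derivative_eq_intros hypF_has_derivative simp: field_simps)
    qed
    then show "- PhiB t < - PhiB (1/2)"
      using t hypF_log_deriv_strict_mono
      by (intro DERIV_pos_interior_imp_less[where f'="\<lambda>s. hypF' (1 - s) / hypF (1 - s) - hypF' s / hypF s", OF t(2)])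
         auto
  qed
  then show ?thesis by simp
qed

lemma A_fun_eq_PhiA:
  assumes "0 < k'" "k' < 1"
  shows "A_fun k' = sqrt (exp (PhiA (k'^2)))"
proof -
  define t where "t = k'^2"
  have t: "0 < t" "t < 1" using assms by (auto simp: t_def power_less_one_iff)
  have F: "hypF t > 0" "hypF (1 - t) > 0" using hypF_pos t by auto
  have "A_fun k' = sqrt (sqrt (1 - t) * sqrt t * hypF (1 - t) * hypF t)"
    using t assms by (simp add: A_fun_def Let_def hyp2F1_half_half_one t_def)
  also have "sqrt (1 - t) * sqrt t * hypF (1 - t) * hypF t = exp (PhiA t)"
  proof -
    have "ln (sqrt (1 - t) * sqrt t * hypF (1 - t) * hypF t) = PhiA t"
      using t F by (simp add: ln_mult ln_sqrt PhiA_def phiA_def)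
    then show ?thesis using t F by (metis exp_ln mult_pos_pos real_sqrt_gt_zero diff_gt_0_iff_gt)
  qed
  finally show ?thesis by (simp add: t_def)
qed

lemma B_fun_eq_PhiB:
  assumes "0 < k'" "k' < 1"
  shows "B_fun k' = sqrt (exp (PhiB (k'^2)))"
proof -
  define t where "t = k'^2"
  have t: "0 < t" "t < 1" using assms by (auto simp: t_def power_less_one_iff)
  have F: "hypF t > 0" "hypF (1 - t) > 0" using hypF_pos t by auto
  have "B_fun k' = sqrt (hypF (1 - t) * hypF t)"
    using t by (simp add: B_fun_def Let_def hyp2F1_half_half_one t_def)
  also have "hypF (1 - t) * hypF t = exp (PhiB t)"
    using F by (simp add: PhiB_def exp_add)
  finally show ?thesis by (simp add: t_def)
qed

lemma A_fun_B_fun_extremal: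
  assumes k': "0 < k'" "k' < 1"
  shows "A_fun k' \<le> A_fun (1 / sqrt 2) \<and> B_fun k' \<ge> B_fun (1 / sqrt 2) \<and>
         (A_fun k' = A_fun (1 / sqrt 2) \<longleftrightarrow> k' = 1 / sqrt 2) \<and>
         (B_fun k' = B_fun (1 / sqrt 2) \<longleftrightarrow> k' = 1 / sqrt 2)"
proof (cases "k' = 1 / sqrt 2")
  case False
  have half: "0 < 1 / sqrt 2" "1 / sqrt 2 < (1::real)" "(1 / sqrt 2)^2 = (1/2::real)"
    by (auto simp: power_divide)
  have "k'^2 \<noteq> 1/2"
    using False k' by (metis half(1,3) less_eq_real_def power2_eq_iff_nonneg)
  moreover have "0 < k'^2" "k'^2 < 1" using k' by (auto simp: power_less_one_iff)
  ultimately have "A_fun k' < A_fun (1 / sqrt 2)" "B_fun (1 / sqrt 2) < B_fun k'"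
    using PhiA_strict_max PhiB_strict_min
    by (simp_all add: A_fun_eq_PhiA[OF k'] A_fun_eq_PhiA[OF half(1,2)] B_fun_eq_PhiB[OF k']
        B_fun_eq_PhiB[OF half(1,2)] half(3))
  then show ?thesis using False by auto
qed simp

lemma theta_products_extremal:
  assumes "\<alpha> > 0"
  shows "theta4 (exp (-pi * \<alpha>^2)) * theta4 (exp (-pi / \<alpha>^2)) \<le> (theta4 (exp (-pi)))^2 \<and>
         theta3 (exp (-pi * \<alpha>^2)) * theta3 (exp (-pi / \<alpha>^2)) \<ge> (theta3 (exp (-pi)))^2 \<and>
         (theta4 (exp (-pi * \<alpha>^2)) * theta4 (exp (-pi / \<alpha>^2)) = (theta4 (exp (-pi)))^2 \<longleftrightarrow> \<alpha> = 1) \<and>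
         (theta3 (exp (-pi * \<alpha>^2)) * theta3 (exp (-pi / \<alpha>^2)) = (theta3 (exp (-pi)))^2 \<longleftrightarrow> \<alpha> = 1)"
proof -
  define x where "x = \<alpha>^2"
  have x: "x > 0" using assms by (simp add: x_def)
  have q: "exp (-pi * \<alpha>^2) = exp (-(pi * x))" "exp (-pi / \<alpha>^2) = exp (-(pi * (1/x)))"
    "exp (-pi) = exp (-(pi * 1))"
    by (simp_all add: x_def)
  have "theta4 (exp (-pi * \<alpha>^2)) * theta4 (exp (-pi / \<alpha>^2)) = Theta4_prod x"
    "(theta4 (exp (-pi)))^2 = Theta4_prod 1"
    "theta3 (exp (-pi * \<alpha>^2)) * theta3 (exp (-pi / \<alpha>^2)) = Theta3_prod x"
    "(theta3 (exp (-pi)))^2 = Theta3_prod 1"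
    unfolding q Theta4_prod_def Theta3_prod_def
    using x theta4_exp_eq_Theta4[of x] theta4_exp_eq_Theta4[of "1/x"] theta4_exp_eq_Theta4[of 1]
      theta3_exp_eq_Theta3[of x] theta3_exp_eq_Theta3[of "1/x"] theta3_exp_eq_Theta3[of 1]
    by (simp_all add: power2_eq_square)
  moreover have "x = 1 \<longleftrightarrow> \<alpha> = 1" using assms power2_eq_1_iff[of \<alpha>] by (auto simp: x_def)
  ultimately show ?thesis using Theta4_prod_strict_max[OF x] Theta3_prod_strict_min[OF x] by simp
qed

theorem mainTheorem5:
  shows "(\<forall>k'::real. 0 < k' \<and> k' < 1 \<longrightarrow>
            A_fun k' \<le> A_fun (1 / sqrt 2) \<and>
            B_fun k' \<ge> B_fun (1 / sqrt 2) \<and>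
            (A_fun k' = A_fun (1 / sqrt 2) \<longleftrightarrow> k' = 1 / sqrt 2) \<and>
            (B_fun k' = B_fun (1 / sqrt 2) \<longleftrightarrow> k' = 1 / sqrt 2))
       \<and> (\<forall>\<alpha>::real. \<alpha> > 0 \<longrightarrow>
            theta4 (exp (-pi * \<alpha>^2)) * theta4 (exp (-pi / \<alpha>^2)) \<le> (theta4 (exp (-pi)))^2 \<and>
            theta3 (exp (-pi * \<alpha>^2)) * theta3 (exp (-pi / \<alpha>^2)) \<ge> (theta3 (exp (-pi)))^2 \<and>
            (theta4 (exp (-pi * \<alpha>^2)) * theta4 (exp (-pi / \<alpha>^2)) = (theta4 (exp (-pi)))^2
               \<longleftrightarrow> \<alpha> = 1) \<and>
            (theta3 (exp (-pi * \<alpha>^2)) * theta3 (exp (-pi / \<alpha>^2)) = (theta3 (exp (-pi)))^2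
               \<longleftrightarrow> \<alpha> = 1))"
  using A_fun_B_fun_extremal theta_products_extremal by blast

end
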